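(* Let $R$ be a commutative noetherian ring, $\mathfrak{a}$ an ideal contained in the Jacobson radical of $R$, and $M$ a finitely generated $R$-module. Then the map $\operatorname{Hom}_R(\widehat{R}^{\mathfrak{a}},C_{\mathfrak{a}}(M))\to\operatorname{Hom}_R(\widehat{R}^{\mathfrak{a}},M)$ induced by the inclusion $C_{\mathfrak{a}}(M)\hookrightarrow M$ is bijective.
   Context: $\widehat{R}^{\mathfrak{a}}$ is the $\mathfrak{a}$-adic completion of $R$. A module $N$ is $\mathfrak{a}$-adically complete if $N\to\varprojlim_n N/\mathfrak{a}^nN$ is an isomorphism. $C_{\mathfrak{a}}(M)$ denotes the unique maximal $\mathfrak{a}$-adically complete $R$-submodule of the finitely generated module $M$ (such a submodule exists and is unique). *)

theory Defs
  imports "HOL-Algebra.Module" "HOL-Algebra.Ideal_Product" "HOL-Algebra.Ring_Divisibility"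
    "HOL-Library.FuncSet"
begin

primrec ideal_power :: "('a, 'c) ring_scheme \<Rightarrow> 'a set \<Rightarrow> nat \<Rightarrow> 'a set" where
  "ideal_power R I 0 = carrier R"
| "ideal_power R I (Suc n) = ideal_prod R (ideal_power R I n) I"

definition jacobson_radical :: "('a, 'c) ring_scheme \<Rightarrow> 'a set" where
  "jacobson_radical R = carrier R \<inter> \<Inter>{P. maximalideal P R}"

definition mod_span :: "('a, 'c) ring_scheme \<Rightarrow> ('a, 'm) module \<Rightarrow> 'm set \<Rightarrow> 'm set" where
  "mod_span R M S = \<Inter>{N. submodule N R M \<and> S \<subseteq> N}"

definition fin_gen_module :: "('a, 'c) ring_scheme \<Rightarrow> ('a, 'm) module \<Rightarrow> bool" where
  "fin_gen_module R M \<longleftrightarrow> (\<exists>S. S \<subseteq> carrier M \<and> finite S \<and> mod_span R M S = carrier M)"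

definition ideal_smult :: "('a, 'c) ring_scheme \<Rightarrow> ('a, 'm) module \<Rightarrow> 'a set \<Rightarrow> 'm set \<Rightarrow> 'm set" where
  "ideal_smult R M J N = mod_span R M {r \<odot>\<^bsub>M\<^esub> x | r x. r \<in> J \<and> x \<in> N}"

definition mcoset :: "('a, 'm) module \<Rightarrow> 'm set \<Rightarrow> 'm \<Rightarrow> 'm set" where
  "mcoset M K x = (\<lambda>y. x \<oplus>\<^bsub>M\<^esub> y) ` K"

text \<open>The inverse limit lim_n N / I^n N, realised as compatible sequences of cosets
  (the transition map N/I^(n+1)N \<rightarrow> N/I^nN sends a coset to the coset containing it).\<close>
definition adic_invlim :: "('a, 'c) ring_scheme \<Rightarrow> ('a, 'm) module \<Rightarrow> 'a set \<Rightarrow> 'm set \<Rightarrow> (nat \<Rightarrow> 'm set) set" where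
  "adic_invlim R M I N =
     {c. (\<forall>n. \<exists>x\<in>N. c n = mcoset M (ideal_smult R M (ideal_power R I n) N) x) \<and>
         (\<forall>n. c (Suc n) \<subseteq> c n)}"

definition adic_canon :: "('a, 'c) ring_scheme \<Rightarrow> ('a, 'm) module \<Rightarrow> 'a set \<Rightarrow> 'm set \<Rightarrow> 'm \<Rightarrow> (nat \<Rightarrow> 'm set)" where
  "adic_canon R M I N x = (\<lambda>n. mcoset M (ideal_smult R M (ideal_power R I n) N) x)"

text \<open>A submodule N of M is I-adically complete if N \<rightarrow> lim_n N/I^nN is an isomorphism
  (it is always a homomorphism; isomorphism = bijective).\<close>
definition adically_complete :: "('a, 'c) ring_scheme \<Rightarrow> ('a, 'm) module \<Rightarrow> 'a set \<Rightarrow> 'm set \<Rightarrow> bool" where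
  "adically_complete R M I N \<longleftrightarrow> bij_betw (adic_canon R M I N) N (adic_invlim R M I N)"

definition max_complete_submodule :: "('a, 'c) ring_scheme \<Rightarrow> ('a, 'm) module \<Rightarrow> 'a set \<Rightarrow> 'm set" where
  "max_complete_submodule R M I =
     (THE N. submodule N R M \<and> adically_complete R M I N \<and>
        (\<forall>N'. submodule N' R M \<and> adically_complete R M I N' \<and> N \<subseteq> N' \<longrightarrow> N' = N))"

definition ring_module :: "('a, 'c) ring_scheme \<Rightarrow> ('a, 'a) module" where
  "ring_module R = \<lparr>carrier = carrier R, monoid.mult = monoid.mult R, one = one R, ring.zero = zero R,
                     ring.add = add R, module.smult = monoid.mult R\<rparr>"

definition adic_completion :: "('a, 'c) ring_scheme \<Rightarrow> ('a, 'm) module \<Rightarrow> 'a set \<Rightarrow> ('a, nat \<Rightarrow> 'm set) module" where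
  "adic_completion R M I =
    (let K = (\<lambda>n. ideal_smult R M (ideal_power R I n) (carrier M)) in
     \<lparr>carrier = adic_invlim R M I (carrier M),
      monoid.mult = (\<lambda>c d n. K n), one = K, ring.zero = K,
      ring.add = (\<lambda>c d n. {x \<oplus>\<^bsub>M\<^esub> y | x y. x \<in> c n \<and> y \<in> d n}),
      module.smult = (\<lambda>r c n. {(r \<odot>\<^bsub>M\<^esub> x) \<oplus>\<^bsub>M\<^esub> y | x y. x \<in> c n \<and> y \<in> K n})\<rparr>)"

definition ring_completion :: "('a, 'c) ring_scheme \<Rightarrow> 'a set \<Rightarrow> ('a, nat \<Rightarrow> 'a set) module" where
  "ring_completion R I = adic_completion R (ring_module R) I"

definition module_Hom :: "('a, 'c) ring_scheme \<Rightarrow> ('a, 'x) module \<Rightarrow> ('a, 'y) module \<Rightarrow> ('x \<Rightarrow> 'y) set" where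
  "module_Hom R A B =
     {f. f \<in> carrier A \<rightarrow>\<^sub>E carrier B \<and>
         (\<forall>x\<in>carrier A. \<forall>y\<in>carrier A. f (x \<oplus>\<^bsub>A\<^esub> y) = f x \<oplus>\<^bsub>B\<^esub> f y) \<and>
         (\<forall>r\<in>carrier R. \<forall>x\<in>carrier A. f (r \<odot>\<^bsub>A\<^esub> x) = r \<odot>\<^bsub>B\<^esub> f x)}"

end

theory Submission
  imports Defs
begin

text \<open>
  Let \<open>f\<close> be an \<open>R\<close>-linear map from \<open>R\<^sup>\<and>\<close> to \<open>M\<close> and \<open>N = f(R\<^sup>\<and>)\<close>.
  Since the powers \<open>I\<^sup>n\<close> are finitely generated, \<open>I\<^sup>n N\<close> consists exactly of the images of the
  elements of \<open>R\<^sup>\<and>\<close> whose \<open>n\<close>-th coordinate lies in \<open>I\<^sup>n\<close>. Hence an \<open>I\<close>-adic Cauchy sequence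
  in \<open>N\<close> lifts to a Cauchy sequence in \<open>R\<^sup>\<and>\<close>, whose limit maps to a limit in \<open>N\<close>.
  By Krull's intersection theorem (this is where \<open>I \<subseteq> rad R\<close> and noetherianity enter) every
  submodule of \<open>M\<close> is \<open>I\<close>-adically separated, so a submodule is complete iff its Cauchy
  sequences converge. That property passes to sums of submodules, so \<open>C\<^sub>I(M)\<close> contains every
  complete submodule, in particular \<open>N\<close>. Thus every map \<open>R\<^sup>\<and> \<rightarrow> M\<close> already lands in
  \<open>C\<^sub>I(M)\<close>, and the induced map on Hom sets is the identity.
\<close>

context abelian_group begin

lemma a_minus_add_cancel: "a \<in> carrier G \<Longrightarrow> b \<in> carrier G \<Longrightarrow> (a \<ominus> b) \<oplus> b = a"
  by (simp add: a_minus_def a_assoc l_neg)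

lemma a_add_minus_cancel_left: "a \<in> carrier G \<Longrightarrow> b \<in> carrier G \<Longrightarrow> (a \<oplus> b) \<ominus> a = b"
  by (metis a_comm a_assoc r_neg r_zero add.inv_closed a_minus_def)

lemma a_add_minus_cancel: "a \<in> carrier G \<Longrightarrow> b \<in> carrier G \<Longrightarrow> a \<oplus> (b \<ominus> a) = b"
  by (metis a_comm a_minus_add_cancel minus_closed)

lemma a_minus_chain:
  "a \<in> carrier G \<Longrightarrow> b \<in> carrier G \<Longrightarrow> c \<in> carrier G \<Longrightarrow> (a \<ominus> b) \<oplus> (b \<ominus> c) = a \<ominus> c"
  by (simp add: a_minus_def a_assoc r_neg1)

lemma a_add_minus_add:
  assumes "x \<in> carrier G" "y \<in> carrier G" "a \<in> carrier G" "b \<in> carrier G"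
  shows "(x \<oplus> y) \<ominus> (a \<oplus> b) = (x \<ominus> a) \<oplus> (y \<ominus> b)"
  using assms by (simp add: a_minus_def minus_add a_ac)

end

section \<open>Ideals\<close>

context cring begin

lemma cring_idealI:
  assumes "J \<subseteq> carrier R" "\<zero> \<in> J" "\<And>x y. x \<in> J \<Longrightarrow> y \<in> J \<Longrightarrow> x \<oplus> y \<in> J"
    "\<And>r x. r \<in> carrier R \<Longrightarrow> x \<in> J \<Longrightarrow> r \<otimes> x \<in> J"
  shows "ideal J R"
proof (rule idealI)
  show "ring R" by (rule ring_axioms)
  show "subgroup J (add_monoid R)"
  proof (rule subgroup.intro)
    fix x assume x: "x \<in> J"
    have "(\<ominus> \<one>) \<otimes> x = \<ominus> x" using x assms(1) l_minus by auto
    moreover have "(\<ominus> \<one>) \<otimes> x \<in> J" using assms(4) x by auto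
    ultimately show "inv\<^bsub>add_monoid R\<^esub> x \<in> J" by (simp add: a_inv_def)
  qed (use assms in auto)
  show "\<And>a x. a \<in> J \<Longrightarrow> x \<in> carrier R \<Longrightarrow> x \<otimes> a \<in> J" using assms by auto
  show "\<And>a x. a \<in> J \<Longrightarrow> x \<in> carrier R \<Longrightarrow> a \<otimes> x \<in> J" using assms m_comm by (metis subsetD)
qed

lemma ideal_power_ideal: "ideal I R \<Longrightarrow> ideal (ideal_power R I n) R"
  by (induction n) (auto intro: ideal_prod_is_ideal oneideal)

lemma ideal_power_carrier: "ideal I R \<Longrightarrow> ideal_power R I n \<subseteq> carrier R"
  using ideal_power_ideal ideal.axioms(1) additive_subgroup.a_subset by blast

lemma ideal_power_Suc_subset: "ideal I R \<Longrightarrow> ideal_power R I (Suc n) \<subseteq> ideal_power R I n"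
  using ideal_prod_inter[OF ideal_power_ideal] by auto

lemma ideal_power_antimono: "ideal I R \<Longrightarrow> m \<le> n \<Longrightarrow> ideal_power R I n \<subseteq> ideal_power R I m"
proof (induction n)
  case (Suc n)
  then show ?case using ideal_power_Suc_subset[OF Suc.prems(1), of n] by (cases "m = Suc n") auto
qed auto

lemma ideal_power_add:
  "ideal I R \<Longrightarrow> ideal_power R I (m + n) = ideal_prod R (ideal_power R I m) (ideal_power R I n)"
proof (induction n)
  case 0 then show ?case using ideal_prod_one[OF ideal_power_ideal] by simp
next
  case (Suc n)
  then show ?case using ideal_prod_assoc[OF ideal_power_ideal[of I m] ideal_power_ideal[of I n] Suc.prems] by simp
qed

lemma jacobson_radical_one_minus_unit:
  assumes a: "a \<in> jacobson_radical R"
  shows "\<exists>v\<in>carrier R. v \<otimes> (\<one> \<ominus> a) = \<one>"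
proof (rule ccontr)
  assume no_inverse: "\<not> ?thesis"
  have aR: "a \<in> carrier R" using a unfolding jacobson_radical_def by auto
  define u where "u = \<one> \<ominus> a"
  have uR: "u \<in> carrier R" using aR u_def by auto
  define F where "F = {P. ideal P R \<and> PIdl u \<subseteq> P \<and> \<one> \<notin> P}"
  have "\<one> \<notin> PIdl u" using no_inverse unfolding u_def cgenideal_def by auto
  then have "PIdl u \<in> F" unfolding F_def using cgenideal_ideal uR by auto
  have "\<exists>P\<in>F. \<forall>X\<in>F. P \<subseteq> X \<longrightarrow> X = P"
  proof (rule subset_Zorn)
    fix C assume C: "subset.chain F C"
    show "\<exists>U\<in>F. \<forall>X\<in>C. X \<subseteq> U"
    proof (cases "C = {}")
      case True then show ?thesis using \<open>PIdl u \<in> F\<close> by auto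
    next
      case False
      have "subset.chain {I. ideal I R} C" using C unfolding F_def pred_on.chain_def by auto
      then have "ideal (\<Union>C) R" using chain_Union_is_ideal[of C] False by simp
      moreover have "PIdl u \<subseteq> \<Union>C" using C False unfolding F_def pred_on.chain_def by blast
      moreover have "\<one> \<notin> \<Union>C" using C unfolding F_def pred_on.chain_def by auto
      ultimately show ?thesis unfolding F_def by auto
    qed
  qed
  then obtain P where P: "P \<in> F" "\<And>X. X \<in> F \<Longrightarrow> P \<subseteq> X \<Longrightarrow> X = P" by auto
  have Pid: "ideal P R" and uP: "u \<in> P" and oP: "\<one> \<notin> P"
    using P(1) cgenideal_self[OF uR] unfolding F_def by auto
  have "maximalideal P R"
  proof (rule maximalidealI[OF Pid])
    show "carrier R \<noteq> P" using oP by auto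
    fix J assume J: "ideal J R" "P \<subseteq> J" "J \<subseteq> carrier R"
    show "J = P \<or> J = carrier R"
      using ideal.one_imp_carrier[OF J(1)] P J unfolding F_def by (cases "\<one> \<in> J") auto
  qed
  then have "u \<oplus> a \<in> P" using a uP Pid unfolding jacobson_radical_def
    by (simp add: additive_subgroup.a_closed ideal.axioms(1))
  moreover have "u \<oplus> a = \<one>" using aR unfolding u_def by (simp add: a_minus_add_cancel)
  ultimately show False using oP by simp
qed

lemma ideal_prod_mono:
  assumes "I1 \<subseteq> I2" "J1 \<subseteq> J2"
  shows "ideal_prod R I1 J1 \<subseteq> ideal_prod R I2 J2"
proof
  fix x assume "x \<in> ideal_prod R I1 J1"
  then show "x \<in> ideal_prod R I2 J2"
    by (induction rule: ideal_prod.induct) (use assms in \<open>auto intro: ideal_prod.prod ideal_prod.sum\<close>)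
qed

lemma genideal_mult_in_ideal:
  assumes D: "ideal D R" and S: "S \<subseteq> carrier R" and T: "T \<subseteq> carrier R"
    and ST: "\<And>s t. s \<in> S \<Longrightarrow> t \<in> T \<Longrightarrow> s \<otimes> t \<in> D" and s: "s \<in> Idl S" and t: "t \<in> T"
  shows "s \<otimes> t \<in> D"
proof -
  let ?C = "{s \<in> carrier R. \<forall>t\<in>T. s \<otimes> t \<in> D}"
  note Dsub = ideal.axioms(1)[OF D]
  have "ideal ?C R"
  proof (rule cring_idealI)
    show "\<zero> \<in> ?C" using T additive_subgroup.zero_closed[OF Dsub] by auto
    show "x \<oplus> y \<in> ?C" if "x \<in> ?C" "y \<in> ?C" for x y
      using that T additive_subgroup.a_closed[OF Dsub] by (auto simp: l_distr subsetD)
    show "r \<otimes> x \<in> ?C" if "r \<in> carrier R" "x \<in> ?C" for r x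
      using that T ideal.I_l_closed[OF D] by (auto simp: m_assoc subsetD)
  qed auto
  then have "Idl S \<subseteq> ?C" by (rule genideal_minimal) (use S ST in auto)
  then show ?thesis using s t by blast
qed

lemma ideal_prod_genideal_least:
  assumes D: "ideal D R" and B: "B \<subseteq> carrier R" and C: "C \<subseteq> carrier R"
    and BC: "\<And>b c. b \<in> B \<Longrightarrow> c \<in> C \<Longrightarrow> b \<otimes> c \<in> D"
  shows "ideal_prod R (Idl B) (Idl C) \<subseteq> D"
proof
  have IB: "Idl B \<subseteq> carrier R" using genideal_ideal[OF B] ideal.axioms(1) additive_subgroup.a_subset by blast
  have IC: "Idl C \<subseteq> carrier R" using genideal_ideal[OF C] ideal.axioms(1) additive_subgroup.a_subset by blast
  have "c \<otimes> b \<in> D" if "c \<in> C" "b \<in> Idl B" for b c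
    using genideal_mult_in_ideal[OF D B C BC that(2,1)] that IB C by (simp add: m_comm subsetD)
  then have mult_in: "b \<otimes> c \<in> D" if "b \<in> Idl B" "c \<in> Idl C" for b c
    using genideal_mult_in_ideal[OF D C IB _ that(2,1)] that IB IC by (simp add: m_comm subsetD)
  fix x assume "x \<in> ideal_prod R (Idl B) (Idl C)"
  then show "x \<in> D"
  proof (induction rule: ideal_prod.induct)
    case (prod i j) then show ?case by (rule mult_in)
  next
    case (sum s1 s2) then show ?case using additive_subgroup.a_closed[OF ideal.axioms(1)[OF D]] by blast
  qed
qed

lemma foldr_mult_closed: "set xs \<subseteq> carrier R \<Longrightarrow> foldr (\<otimes>) xs \<one> \<in> carrier R"
  by (induction xs) auto

lemma foldr_mult_filter:
  assumes "set xs \<subseteq> carrier R" "a \<in> carrier R"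
  shows "foldr (\<otimes>) xs \<one> = a [^] (length (filter ((=) a) xs)) \<otimes> foldr (\<otimes>) (filter (\<lambda>y. y \<noteq> a) xs) \<one>"
  using assms
proof (induction xs)
  case (Cons y xs)
  have "foldr (\<otimes>) (filter (\<lambda>y. y \<noteq> a) xs) \<one> \<in> carrier R"
    using Cons.prems by (intro foldr_mult_closed) auto
  then show ?case using Cons by (cases "y = a") (simp_all add: m_assoc nat_pow_Suc2 m_lcomm)
qed simp

text \<open>Pigeonhole: a product of more than \<open>card A * m\<close> factors from \<open>A\<close> has some factor \<open>a\<close>
  at least \<open>m\<close> times.\<close>
lemma long_product_in_ideal:
  assumes "finite A" "A \<subseteq> carrier R" "ideal Q R" "\<And>a. a \<in> A \<Longrightarrow> a [^] m \<in> Q"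
  shows "set xs \<subseteq> A \<Longrightarrow> card A * m < length xs \<Longrightarrow> foldr (\<otimes>) xs \<one> \<in> Q"
  using assms
proof (induction A arbitrary: xs rule: finite_induct)
  case (insert a A)
  have aR: "a \<in> carrier R" and xsR: "set xs \<subseteq> carrier R" using insert.prems by auto
  define ys where "ys = filter (\<lambda>y. y \<noteq> a) xs"
  define j where "j = length (filter ((=) a) xs)"
  have ysR: "set ys \<subseteq> carrier R" using xsR unfolding ys_def by auto
  have eq: "foldr (\<otimes>) xs \<one> = a [^] j \<otimes> foldr (\<otimes>) ys \<one>"
    unfolding j_def ys_def by (rule foldr_mult_filter[OF xsR aR])
  have len: "length xs = j + length ys"
    unfolding j_def ys_def using sum_length_filter_compl[of "(=) a" xs]
    by (metis (mono_tags, lifting) filter_cong)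
  show ?case
  proof (cases "m \<le> j")
    case True
    have "a [^] j = a [^] m \<otimes> a [^] (j - m)" using True aR by (simp add: nat_pow_mult)
    then have "a [^] j \<in> Q" using insert.prems(5)[of a] ideal.I_r_closed[OF insert.prems(4)] aR by auto
    then show ?thesis using eq ideal.I_r_closed[OF insert.prems(4)] foldr_mult_closed[OF ysR] by auto
  next
    case False
    have "card (insert a A) = Suc (card A)" using insert.hyps by simp
    then have "card A * m < length ys" using insert.prems(2) len False by (simp add: algebra_simps)
    moreover have "set ys \<subseteq> A" using insert.prems(1) unfolding ys_def by auto
    ultimately have "foldr (\<otimes>) ys \<one> \<in> Q" using insert.IH insert.prems by auto
    then show ?thesis using eq ideal.I_l_closed[OF insert.prems(4)] aR by auto
  qed
qed simp

lemma ideal_power_genideal_subset: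
  assumes A: "A \<subseteq> carrier R"
  shows "ideal_power R (Idl A) n \<subseteq> Idl {foldr (\<otimes>) xs \<one> | xs. set xs \<subseteq> A \<and> length xs = n}"
proof (induction n)
  case 0
  have "{foldr (\<otimes>) xs \<one> | xs. set xs \<subseteq> A \<and> length xs = 0} = {\<one>}" by auto
  then show ?case using genideal_one by simp
next
  case (Suc n)
  let ?P = "\<lambda>n. {foldr (\<otimes>) xs \<one> | xs. set xs \<subseteq> A \<and> length xs = n}"
  have PR: "?P n \<subseteq> carrier R" for n using A foldr_mult_closed by blast
  have "ideal_power R (Idl A) (Suc n) \<subseteq> ideal_prod R (Idl (?P n)) (Idl A)"
    using ideal_prod_mono[OF Suc.IH subset_refl] by simp
  also have "\<dots> \<subseteq> Idl (?P (Suc n))"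
  proof (rule ideal_prod_genideal_least[OF genideal_ideal[OF PR] PR A])
    fix b c assume "b \<in> ?P n" "c \<in> A"
    then obtain xs where xs: "set xs \<subseteq> A" "length xs = n" "b = foldr (\<otimes>) xs \<one>" by blast
    moreover have "foldr (\<otimes>) xs \<one> \<in> carrier R" "c \<in> carrier R"
      using xs(1) \<open>c \<in> A\<close> A foldr_mult_closed[of xs] by auto
    ultimately have "b \<otimes> c = foldr (\<otimes>) (c # xs) \<one>" using m_comm by simp
    then show "b \<otimes> c \<in> Idl (?P (Suc n))"
      using xs \<open>c \<in> A\<close> genideal_self[OF PR] by fastforce
  qed
  finally show ?case .
qed

lemma ideal_power_subset_of_gen_powers:
  assumes A: "finite A" "A \<subseteq> carrier R" and Q: "ideal Q R"
    and pw: "\<And>a. a \<in> A \<Longrightarrow> \<exists>m::nat. a [^] m \<in> Q"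
  shows "\<exists>k. ideal_power R (Idl A) k \<subseteq> Q"
proof -
  obtain mf :: "'a \<Rightarrow> nat" where mf: "\<And>a. a \<in> A \<Longrightarrow> a [^] mf a \<in> Q"
    using bchoice[of A "\<lambda>a m. a [^] (m::nat) \<in> Q"] pw by blast
  define m where "m = Max (mf ` A)"
  have mA: "a [^] m \<in> Q" if a: "a \<in> A" for a
  proof -
    have "mf a \<le> m" unfolding m_def using A(1) a by auto
    then have "a [^] m = a [^] mf a \<otimes> a [^] (m - mf a)" using a A(2) by (auto simp: nat_pow_mult)
    then show ?thesis using mf[OF a] ideal.I_r_closed[OF Q] a A(2) by auto
  qed
  have "{foldr (\<otimes>) xs \<one> | xs. set xs \<subseteq> A \<and> length xs = card A * m + 1} \<subseteq> Q"
    using long_product_in_ideal[OF A Q mA] by auto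
  then show ?thesis using ideal_power_genideal_subset[OF A(2)] genideal_minimal[OF Q] by blast
qed

definition lin_comb :: "'a set \<Rightarrow> ('a \<Rightarrow> 'a) \<Rightarrow> 'a" where
  "lin_comb G y = (\<Oplus>g\<in>G. g \<otimes> y g)"

lemma lin_comb_closed:
  "finite G \<Longrightarrow> G \<subseteq> carrier R \<Longrightarrow> (\<And>g. g \<in> G \<Longrightarrow> y g \<in> carrier R) \<Longrightarrow> lin_comb G y \<in> carrier R"
  unfolding lin_comb_def by (rule finsum_closed) auto

lemma lin_comb_empty: "lin_comb {} y = \<zero>"
  unfolding lin_comb_def by simp

lemma lin_comb_insert:
  assumes "finite G" "insert g G \<subseteq> carrier R" "g \<notin> G" "\<And>h. h \<in> insert g G \<Longrightarrow> y h \<in> carrier R"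
  shows "lin_comb (insert g G) y = g \<otimes> y g \<oplus> lin_comb G y"
  unfolding lin_comb_def by (rule finsum_insert) (use assms in auto)

lemma lin_comb_zero: "finite G \<Longrightarrow> G \<subseteq> carrier R \<Longrightarrow> lin_comb G (\<lambda>g. \<zero>) = \<zero>"
proof -
  assume G: "finite G" "G \<subseteq> carrier R"
  have "lin_comb G (\<lambda>g. \<zero>) = (\<Oplus>g\<in>G. \<zero>)" unfolding lin_comb_def by (rule finsum_cong') (use G in auto)
  then show ?thesis by simp
qed

lemma lin_comb_add:
  assumes "finite G" "G \<subseteq> carrier R" "\<And>g. g \<in> G \<Longrightarrow> y g \<in> carrier R" "\<And>g. g \<in> G \<Longrightarrow> z g \<in> carrier R"
  shows "lin_comb G y \<oplus> lin_comb G z = lin_comb G (\<lambda>g. y g \<oplus> z g)"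
proof -
  have "lin_comb G (\<lambda>g. y g \<oplus> z g) = (\<Oplus>g\<in>G. g \<otimes> y g \<oplus> g \<otimes> z g)"
    unfolding lin_comb_def by (rule finsum_cong') (use assms in \<open>auto simp: r_distr\<close>)
  also have "\<dots> = lin_comb G y \<oplus> lin_comb G z" unfolding lin_comb_def by (rule finsum_addf) (use assms in auto)
  finally show ?thesis by simp
qed

lemma lin_comb_mult:
  assumes "finite G" "G \<subseteq> carrier R" "\<And>g. g \<in> G \<Longrightarrow> y g \<in> carrier R" "r \<in> carrier R"
  shows "r \<otimes> lin_comb G y = lin_comb G (\<lambda>g. r \<otimes> y g)"
proof -
  have "r \<otimes> lin_comb G y = (\<Oplus>g\<in>G. r \<otimes> (g \<otimes> y g))"
    unfolding lin_comb_def by (rule finsum_rdistr) (use assms in auto)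
  also have "\<dots> = lin_comb G (\<lambda>g. r \<otimes> y g)"
    unfolding lin_comb_def by (rule finsum_cong') (use assms in \<open>auto simp: m_lcomm\<close>)
  finally show ?thesis .
qed

lemma genideal_lin_comb:
  assumes G: "finite G" "G \<subseteq> carrier R" and z: "z \<in> Idl G"
  shows "\<exists>a. (\<forall>g\<in>G. a g \<in> carrier R) \<and> z = lin_comb G a"
proof -
  define T where "T = {z. \<exists>a. (\<forall>g\<in>G. a g \<in> carrier R) \<and> z = lin_comb G a}"
  have "ideal T R"
  proof (rule cring_idealI)
    show "T \<subseteq> carrier R" unfolding T_def using lin_comb_closed[OF G] by auto
    show "\<zero> \<in> T" unfolding T_def using lin_comb_zero[OF G] by (intro CollectI exI[of _ "\<lambda>g. \<zero>"]) auto
    fix x y assume x: "x \<in> T"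
    then obtain a where a: "\<forall>g\<in>G. a g \<in> carrier R" "x = lin_comb G a" unfolding T_def by blast
    { assume "y \<in> T"
      then obtain b where b: "\<forall>g\<in>G. b g \<in> carrier R" "y = lin_comb G b" unfolding T_def by blast
      have "x \<oplus> y = lin_comb G (\<lambda>g. a g \<oplus> b g)" using lin_comb_add[OF G] a b by auto
      then show "x \<oplus> y \<in> T" unfolding T_def using a b by (intro CollectI exI[of _ "\<lambda>g. a g \<oplus> b g"]) auto }
    fix r assume r: "r \<in> carrier R"
    have "r \<otimes> x = lin_comb G (\<lambda>g. r \<otimes> a g)" using lin_comb_mult[OF G] a r by auto
    then show "r \<otimes> x \<in> T" unfolding T_def using a r by (intro CollectI exI[of _ "\<lambda>g. r \<otimes> a g"]) auto
  qed
  moreover have "G \<subseteq> T"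
  proof
    fix g0 assume g0: "g0 \<in> G"
    have "lin_comb G (\<lambda>g. if g0 = g then \<one> else \<zero>) = (\<Oplus>g\<in>G. if g0 = g then g else \<zero>)"
      unfolding lin_comb_def by (rule finsum_cong') (use G in auto)
    also have "\<dots> = g0" by (rule finsum_singleton[OF g0 G(1)]) (use G in auto)
    finally show "g0 \<in> T" unfolding T_def
      by (intro CollectI exI[of _ "\<lambda>g. if g0 = g then \<one> else \<zero>"]) auto
  qed
  ultimately have "Idl G \<subseteq> T" by (rule genideal_minimal)
  then show ?thesis using z unfolding T_def by blast
qed

lemma ideal_prod_lin_comb:
  assumes G: "finite G" "G \<subseteq> carrier R" and J: "ideal J R" and z: "z \<in> ideal_prod R (Idl G) J"
  shows "\<exists>y. (\<forall>g\<in>G. y g \<in> J) \<and> z = lin_comb G y"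
  using z
proof (induction rule: ideal_prod.induct)
  case (prod i j)
  obtain a where a: "\<forall>g\<in>G. a g \<in> carrier R" "i = lin_comb G a" using genideal_lin_comb[OF G prod(1)] by blast
  have jR: "j \<in> carrier R" using prod(2) additive_subgroup.a_subset[OF ideal.axioms(1)[OF J]] by auto
  have "i \<otimes> j = lin_comb G (\<lambda>g. j \<otimes> a g)"
    using lin_comb_mult[OF G _ jR, of a] lin_comb_closed[OF G, of a] a jR by (simp add: m_comm)
  moreover have "\<forall>g\<in>G. j \<otimes> a g \<in> J" using a(1) ideal.I_r_closed[OF J prod(2)] by auto
  ultimately show ?case by (intro exI[of _ "\<lambda>g. j \<otimes> a g"]) simp
next
  case (sum s1 s2)
  obtain y1 where y1: "\<forall>g\<in>G. y1 g \<in> J" "s1 = lin_comb G y1" using sum.IH(1) by blast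
  obtain y2 where y2: "\<forall>g\<in>G. y2 g \<in> J" "s2 = lin_comb G y2" using sum.IH(2) by blast
  have JR: "J \<subseteq> carrier R" using additive_subgroup.a_subset[OF ideal.axioms(1)[OF J]] .
  have "s1 \<oplus> s2 = lin_comb G (\<lambda>g. y1 g \<oplus> y2 g)"
    unfolding y1(2) y2(2) by (rule lin_comb_add[OF G]) (use y1 y2 JR in auto)
  moreover have "\<forall>g\<in>G. y1 g \<oplus> y2 g \<in> J" using y1 y2 additive_subgroup.a_closed[OF ideal.axioms(1)[OF J]] by auto
  ultimately show ?case by (intro exI[of _ "\<lambda>g. y1 g \<oplus> y2 g"]) simp
qed

end

section \<open>Submodules\<close>

text \<open>Unlike in \<^locale>\<open>module\<close>, only \<open>R\<close> is an implicit structure here, and \<open>M\<close> has the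
  plain record type on which the operations of the definitions theory act.\<close>
locale Rmodule = module R M for R :: "('a, 'b) ring_scheme" (structure) and M :: "('a, 'm) module"

context Rmodule begin

lemma submodule_iff:
  "submodule P R M \<longleftrightarrow> P \<subseteq> carrier M \<and> \<zero>\<^bsub>M\<^esub> \<in> P \<and> (\<forall>x\<in>P. \<forall>y\<in>P. x \<oplus>\<^bsub>M\<^esub> y \<in> P)
     \<and> (\<forall>r\<in>carrier R. \<forall>x\<in>P. r \<odot>\<^bsub>M\<^esub> x \<in> P)"
proof
  assume P: "submodule P R M"
  then obtain x where x: "x \<in> P" using submoduleE(2) by blast
  have "x \<oplus>\<^bsub>M\<^esub> \<ominus>\<^bsub>M\<^esub> x \<in> P" using submoduleE[OF P] x by blast
  moreover have "x \<oplus>\<^bsub>M\<^esub> \<ominus>\<^bsub>M\<^esub> x = \<zero>\<^bsub>M\<^esub>" using x submoduleE(1)[OF P] M.r_neg by auto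
  ultimately show "P \<subseteq> carrier M \<and> \<zero>\<^bsub>M\<^esub> \<in> P \<and> (\<forall>x\<in>P. \<forall>y\<in>P. x \<oplus>\<^bsub>M\<^esub> y \<in> P)
     \<and> (\<forall>r\<in>carrier R. \<forall>x\<in>P. r \<odot>\<^bsub>M\<^esub> x \<in> P)" using submoduleE[OF P] by auto
next
  assume P: "P \<subseteq> carrier M \<and> \<zero>\<^bsub>M\<^esub> \<in> P \<and> (\<forall>x\<in>P. \<forall>y\<in>P. x \<oplus>\<^bsub>M\<^esub> y \<in> P)
     \<and> (\<forall>r\<in>carrier R. \<forall>x\<in>P. r \<odot>\<^bsub>M\<^esub> x \<in> P)"
  show "submodule P R M"
  proof (rule submoduleI)
    fix a assume a: "a \<in> P"
    have "(\<ominus> \<one>) \<odot>\<^bsub>M\<^esub> a = \<ominus>\<^bsub>M\<^esub> a" using smult_l_minus[of \<one> a] a P by auto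
    moreover have "(\<ominus> \<one>) \<odot>\<^bsub>M\<^esub> a \<in> P" using P a by auto
    ultimately show "\<ominus>\<^bsub>M\<^esub> a \<in> P" by simp
  qed (use P in auto)
qed

lemma submoduleD:
  assumes "submodule P R M"
  shows "P \<subseteq> carrier M" "\<zero>\<^bsub>M\<^esub> \<in> P" "\<And>x y. x \<in> P \<Longrightarrow> y \<in> P \<Longrightarrow> x \<oplus>\<^bsub>M\<^esub> y \<in> P"
    "\<And>r x. r \<in> carrier R \<Longrightarrow> x \<in> P \<Longrightarrow> r \<odot>\<^bsub>M\<^esub> x \<in> P"
    "\<And>x. x \<in> P \<Longrightarrow> \<ominus>\<^bsub>M\<^esub> x \<in> P"
    "\<And>x y. x \<in> P \<Longrightarrow> y \<in> P \<Longrightarrow> x \<ominus>\<^bsub>M\<^esub> y \<in> P"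
  using assms submodule_iff[of P] submoduleE(3)[OF assms] unfolding a_minus_def by auto

lemma submoduleI':
  assumes "P \<subseteq> carrier M" "\<zero>\<^bsub>M\<^esub> \<in> P" "\<And>x y. x \<in> P \<Longrightarrow> y \<in> P \<Longrightarrow> x \<oplus>\<^bsub>M\<^esub> y \<in> P"
    "\<And>r x. r \<in> carrier R \<Longrightarrow> x \<in> P \<Longrightarrow> r \<odot>\<^bsub>M\<^esub> x \<in> P"
  shows "submodule P R M"
  using assms submodule_iff[of P] by auto

lemma zero_submodule: "submodule {\<zero>\<^bsub>M\<^esub>} R M"
  by (rule submoduleI') auto

lemma submodule_Int: "submodule P R M \<Longrightarrow> submodule Q R M \<Longrightarrow> submodule (P \<inter> Q) R M"
  using submoduleD[of P] submoduleD[of Q] by (intro submoduleI') auto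

lemma submodule_INT:
  assumes "\<And>n::nat. submodule (P n) R M"
  shows "submodule (\<Inter>n. P n) R M"
proof (rule submoduleI')
  show "(\<Inter>n. P n) \<subseteq> carrier M" using submoduleD(1)[OF assms[of 0]] by auto
qed (use submoduleD(2-4)[OF assms] in auto)

lemma submodule_Union_chain:
  assumes C: "subset.chain F C" "C \<noteq> {}" and F: "\<And>P. P \<in> F \<Longrightarrow> submodule P R M"
  shows "submodule (\<Union>C) R M"
proof (rule submoduleI')
  have CF: "C \<subseteq> F" using C unfolding pred_on.chain_def by auto
  show "\<Union>C \<subseteq> carrier M" using CF F submoduleD(1) by blast
  show "\<zero>\<^bsub>M\<^esub> \<in> \<Union>C" using C CF F submoduleD(2) by blast
  show "r \<odot>\<^bsub>M\<^esub> x \<in> \<Union>C" if "r \<in> carrier R" "x \<in> \<Union>C" for r x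
    using that CF F submoduleD(4) by blast
  show "x \<oplus>\<^bsub>M\<^esub> y \<in> \<Union>C" if xy: "x \<in> \<Union>C" "y \<in> \<Union>C" for x y
  proof -
    obtain X Y where XY: "X \<in> C" "Y \<in> C" "x \<in> X" "y \<in> Y" using xy by auto
    then have "X \<subseteq> Y \<or> Y \<subseteq> X" using C unfolding pred_on.chain_def by blast
    then show ?thesis using XY CF F submoduleD(3) by blast
  qed
qed

lemma smult_image_submodule:
  assumes P: "submodule P R M" and a: "a \<in> carrier R"
  shows "submodule {a \<odot>\<^bsub>M\<^esub> p | p. p \<in> P} R M"
proof (rule submoduleI')
  note Pc = submoduleD[OF P]
  show "{a \<odot>\<^bsub>M\<^esub> p | p. p \<in> P} \<subseteq> carrier M" using Pc(1) a by auto
  have "\<zero>\<^bsub>M\<^esub> = a \<odot>\<^bsub>M\<^esub> \<zero>\<^bsub>M\<^esub>" using a by simp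
  then show "\<zero>\<^bsub>M\<^esub> \<in> {a \<odot>\<^bsub>M\<^esub> p | p. p \<in> P}" using Pc(2) by blast
  fix x y assume "x \<in> {a \<odot>\<^bsub>M\<^esub> p | p. p \<in> P}"
  then obtain p where p: "p \<in> P" "x = a \<odot>\<^bsub>M\<^esub> p" by blast
  have pM: "p \<in> carrier M" using p Pc(1) by auto
  { assume "y \<in> {a \<odot>\<^bsub>M\<^esub> p | p. p \<in> P}"
    then obtain q where q: "q \<in> P" "y = a \<odot>\<^bsub>M\<^esub> q" by blast
    have "x \<oplus>\<^bsub>M\<^esub> y = a \<odot>\<^bsub>M\<^esub> (p \<oplus>\<^bsub>M\<^esub> q)" unfolding p(2) q(2) using pM q Pc(1) a
      by (simp add: smult_r_distr subsetD)
    then show "x \<oplus>\<^bsub>M\<^esub> y \<in> {a \<odot>\<^bsub>M\<^esub> p | p. p \<in> P}" using p q Pc(3) by blast }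
  fix r assume r: "r \<in> carrier R"
  have "r \<odot>\<^bsub>M\<^esub> x = a \<odot>\<^bsub>M\<^esub> (r \<odot>\<^bsub>M\<^esub> p)"
    unfolding p(2) using pM r a by (simp add: smult_assoc1[symmetric] m_comm)
  then show "r \<odot>\<^bsub>M\<^esub> x \<in> {a \<odot>\<^bsub>M\<^esub> p | p. p \<in> P}" using p r Pc(4) by blast
qed

lemma submodule_add_cancel:
  assumes L: "submodule L R M" and v: "v \<in> L" and w: "w \<in> carrier M" and vw: "v \<oplus>\<^bsub>M\<^esub> w \<in> L"
  shows "w \<in> L"
proof -
  have "v \<in> carrier M" using v submoduleD(1)[OF L] by auto
  then have "(v \<oplus>\<^bsub>M\<^esub> w) \<ominus>\<^bsub>M\<^esub> v = w" using w
    by (metis M.add.m_comm M.add.m_assoc M.r_neg M.r_zero M.add.inv_closed a_minus_def)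
  then show ?thesis using submoduleD(6)[OF L vw v] by simp
qed

definition submodule_sum :: "'m set \<Rightarrow> 'm set \<Rightarrow> 'm set" where
  "submodule_sum P Q = {p \<oplus>\<^bsub>M\<^esub> q | p q. p \<in> P \<and> q \<in> Q}"

lemma submodule_sum_submodule:
  assumes P: "submodule P R M" and Q: "submodule Q R M"
  shows "submodule (submodule_sum P Q) R M"
proof (rule submoduleI')
  note Pc = submoduleD[OF P] and Qc = submoduleD[OF Q]
  show "submodule_sum P Q \<subseteq> carrier M" unfolding submodule_sum_def using Pc(1) Qc(1) by auto
  have "\<zero>\<^bsub>M\<^esub> = \<zero>\<^bsub>M\<^esub> \<oplus>\<^bsub>M\<^esub> \<zero>\<^bsub>M\<^esub>" by simp
  then show "\<zero>\<^bsub>M\<^esub> \<in> submodule_sum P Q" unfolding submodule_sum_def using Pc(2) Qc(2) by blast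
  fix x y assume "x \<in> submodule_sum P Q"
  then obtain p q where pq: "p \<in> P" "q \<in> Q" "x = p \<oplus>\<^bsub>M\<^esub> q" unfolding submodule_sum_def by blast
  have pqM: "p \<in> carrier M" "q \<in> carrier M" using pq Pc(1) Qc(1) by auto
  { assume "y \<in> submodule_sum P Q"
    then obtain p' q' where pq': "p' \<in> P" "q' \<in> Q" "y = p' \<oplus>\<^bsub>M\<^esub> q'"
      unfolding submodule_sum_def by blast
    have "x \<oplus>\<^bsub>M\<^esub> y = (p \<oplus>\<^bsub>M\<^esub> p') \<oplus>\<^bsub>M\<^esub> (q \<oplus>\<^bsub>M\<^esub> q')"
      unfolding pq(3) pq'(3) using pqM pq' Pc(1) Qc(1) by (simp add: M.a_ac subsetD)
    then show "x \<oplus>\<^bsub>M\<^esub> y \<in> submodule_sum P Q" unfolding submodule_sum_def using pq pq' Pc(3) Qc(3) by blast }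
  fix r assume r: "r \<in> carrier R"
  have "r \<odot>\<^bsub>M\<^esub> x = r \<odot>\<^bsub>M\<^esub> p \<oplus>\<^bsub>M\<^esub> r \<odot>\<^bsub>M\<^esub> q" unfolding pq(3) using pqM r by (simp add: smult_r_distr)
  then show "r \<odot>\<^bsub>M\<^esub> x \<in> submodule_sum P Q" unfolding submodule_sum_def using pq r Pc(4) Qc(4) by blast
qed

lemma submodule_sum_upper1: "submodule Q R M \<Longrightarrow> P \<subseteq> carrier M \<Longrightarrow> P \<subseteq> submodule_sum P Q"
  unfolding submodule_sum_def using submoduleD(2) by force

lemma submodule_sum_upper2: "submodule P R M \<Longrightarrow> Q \<subseteq> carrier M \<Longrightarrow> Q \<subseteq> submodule_sum P Q"
  unfolding submodule_sum_def using submoduleD(2) by force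

lemma submodule_sum_least: "P \<subseteq> N \<Longrightarrow> Q \<subseteq> N \<Longrightarrow> submodule N R M \<Longrightarrow> submodule_sum P Q \<subseteq> N"
  unfolding submodule_sum_def using submoduleD(3)[of N] by blast

lemma span_submodule:
  assumes "S \<subseteq> carrier M"
  shows "submodule (mod_span R M S) R M"
proof (rule submoduleI')
  have "carrier M \<in> {N. submodule N R M \<and> S \<subseteq> N}" using carrier_is_submodule assms by auto
  then show "mod_span R M S \<subseteq> carrier M" unfolding mod_span_def by auto
  show "\<zero>\<^bsub>M\<^esub> \<in> mod_span R M S" unfolding mod_span_def using submoduleD(2) by auto
  show "x \<oplus>\<^bsub>M\<^esub> y \<in> mod_span R M S" if "x \<in> mod_span R M S" "y \<in> mod_span R M S" for x y
    using that submoduleD(3) unfolding mod_span_def by auto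
  show "r \<odot>\<^bsub>M\<^esub> x \<in> mod_span R M S" if "r \<in> carrier R" "x \<in> mod_span R M S" for r x
    using that submoduleD(4) unfolding mod_span_def by auto
qed

lemma span_incl: "S \<subseteq> mod_span R M S"
  unfolding mod_span_def by auto

lemma span_least: "submodule N R M \<Longrightarrow> S \<subseteq> N \<Longrightarrow> mod_span R M S \<subseteq> N"
  unfolding mod_span_def by auto

lemma span_mono: "S \<subseteq> T \<Longrightarrow> T \<subseteq> carrier M \<Longrightarrow> mod_span R M S \<subseteq> mod_span R M T"
  using span_least[OF span_submodule[of T]] span_incl[of T] by auto

lemma span_empty: "mod_span R M {} = {\<zero>\<^bsub>M\<^esub>}"
  using span_least[OF zero_submodule, of "{}"] submoduleD(2)[OF span_submodule[of "{}"]] by auto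

lemma ideal_smult_submodule:
  assumes "J \<subseteq> carrier R" "P \<subseteq> carrier M"
  shows "submodule (ideal_smult R M J P) R M"
  unfolding ideal_smult_def by (rule span_submodule) (use assms in auto)

lemma ideal_smultI: "r \<in> J \<Longrightarrow> x \<in> P \<Longrightarrow> r \<odot>\<^bsub>M\<^esub> x \<in> ideal_smult R M J P"
proof -
  assume "r \<in> J" "x \<in> P"
  then have "r \<odot>\<^bsub>M\<^esub> x \<in> {r \<odot>\<^bsub>M\<^esub> x |r x. r \<in> J \<and> x \<in> P}" by blast
  then show ?thesis unfolding ideal_smult_def by (rule subsetD[OF span_incl])
qed

lemma ideal_smult_least:
  assumes "submodule N R M" "\<And>r x. r \<in> J \<Longrightarrow> x \<in> P \<Longrightarrow> r \<odot>\<^bsub>M\<^esub> x \<in> N"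
  shows "ideal_smult R M J P \<subseteq> N"
  unfolding ideal_smult_def by (rule span_least) (use assms in blast)+

lemma ideal_smult_subset:
  assumes "J \<subseteq> carrier R" "submodule P R M"
  shows "ideal_smult R M J P \<subseteq> P"
  by (rule ideal_smult_least) (use assms submoduleD in auto)

lemma ideal_smult_mono:
  assumes "J' \<subseteq> carrier R" "P' \<subseteq> carrier M" "J \<subseteq> J'" "P \<subseteq> P'"
  shows "ideal_smult R M J P \<subseteq> ideal_smult R M J' P'"
  by (rule ideal_smult_least[OF ideal_smult_submodule[OF assms(1,2)]]) (use assms ideal_smultI in blast)

lemma ideal_smult_carrier:
  assumes "submodule P R M"
  shows "ideal_smult R M (carrier R) P = P"
proof
  show "ideal_smult R M (carrier R) P \<subseteq> P" using ideal_smult_subset assms by auto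
  show "P \<subseteq> ideal_smult R M (carrier R) P"
    using ideal_smultI[of \<one> "carrier R" _ P] submoduleD(1)[OF assms] by force
qed

lemma lin_submodule:
  assumes J: "ideal J R" and x: "x \<in> carrier M" and Q: "submodule Q R M"
  shows "submodule {a \<odot>\<^bsub>M\<^esub> x \<oplus>\<^bsub>M\<^esub> s | a s. a \<in> J \<and> s \<in> Q} R M"
proof (rule submoduleI')
  have JR: "J \<subseteq> carrier R" using J ideal.axioms(1) additive_subgroup.a_subset by blast
  note Qc = submoduleD[OF Q]
  show "{a \<odot>\<^bsub>M\<^esub> x \<oplus>\<^bsub>M\<^esub> s | a s. a \<in> J \<and> s \<in> Q} \<subseteq> carrier M"
    using JR Qc(1) x by auto
  have "\<zero>\<^bsub>M\<^esub> = \<zero> \<odot>\<^bsub>M\<^esub> x \<oplus>\<^bsub>M\<^esub> \<zero>\<^bsub>M\<^esub>" using x by simp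
  then show "\<zero>\<^bsub>M\<^esub> \<in> {a \<odot>\<^bsub>M\<^esub> x \<oplus>\<^bsub>M\<^esub> s | a s. a \<in> J \<and> s \<in> Q}"
    using additive_subgroup.zero_closed[OF ideal.axioms(1)[OF J]] Qc(2) by blast
  fix u v assume "u \<in> {a \<odot>\<^bsub>M\<^esub> x \<oplus>\<^bsub>M\<^esub> s | a s. a \<in> J \<and> s \<in> Q}"
  then obtain a s where as: "a \<in> J" "s \<in> Q" "u = a \<odot>\<^bsub>M\<^esub> x \<oplus>\<^bsub>M\<^esub> s" by auto
  { assume "v \<in> {a \<odot>\<^bsub>M\<^esub> x \<oplus>\<^bsub>M\<^esub> s | a s. a \<in> J \<and> s \<in> Q}"
    then obtain b t where bt: "b \<in> J" "t \<in> Q" "v = b \<odot>\<^bsub>M\<^esub> x \<oplus>\<^bsub>M\<^esub> t" by auto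
    have "u \<oplus>\<^bsub>M\<^esub> v = (a \<oplus> b) \<odot>\<^bsub>M\<^esub> x \<oplus>\<^bsub>M\<^esub> (s \<oplus>\<^bsub>M\<^esub> t)"
      unfolding as(3) bt(3) using as bt JR Qc(1) x by (simp add: smult_l_distr M.a_ac subsetD)
    moreover have "a \<oplus> b \<in> J" using as bt J by (simp add: additive_subgroup.a_closed ideal.axioms(1))
    ultimately show "u \<oplus>\<^bsub>M\<^esub> v \<in> {a \<odot>\<^bsub>M\<^esub> x \<oplus>\<^bsub>M\<^esub> s | a s. a \<in> J \<and> s \<in> Q}"
      using as bt Qc(3) by blast }
  fix r assume r: "r \<in> carrier R"
  have "r \<odot>\<^bsub>M\<^esub> u = (r \<otimes> a) \<odot>\<^bsub>M\<^esub> x \<oplus>\<^bsub>M\<^esub> (r \<odot>\<^bsub>M\<^esub> s)"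
    unfolding as(3) using as JR Qc(1) x r by (simp add: smult_r_distr smult_assoc1 subsetD)
  moreover have "r \<otimes> a \<in> J" using ideal.I_l_closed[OF J as(1) r] .
  ultimately show "r \<odot>\<^bsub>M\<^esub> u \<in> {a \<odot>\<^bsub>M\<^esub> x \<oplus>\<^bsub>M\<^esub> s | a s. a \<in> J \<and> s \<in> Q}"
    using as r Qc(4) by blast
qed

lemma span_insert:
  assumes S: "S \<subseteq> carrier M" and x: "x \<in> carrier M"
  shows "mod_span R M (insert x S) = {a \<odot>\<^bsub>M\<^esub> x \<oplus>\<^bsub>M\<^esub> s | a s. a \<in> carrier R \<and> s \<in> mod_span R M S}"
proof
  note spS = submoduleD[OF span_submodule[OF S]]
  have ins: "insert x S \<subseteq> carrier M" using S x by auto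
  have "x = \<one> \<odot>\<^bsub>M\<^esub> x \<oplus>\<^bsub>M\<^esub> \<zero>\<^bsub>M\<^esub>" using x by simp
  moreover have "y = \<zero> \<odot>\<^bsub>M\<^esub> x \<oplus>\<^bsub>M\<^esub> y" if "y \<in> mod_span R M S" for y using that x spS(1) by auto
  ultimately have "insert x S \<subseteq> {a \<odot>\<^bsub>M\<^esub> x \<oplus>\<^bsub>M\<^esub> s | a s. a \<in> carrier R \<and> s \<in> mod_span R M S}"
    using spS(2) span_incl[of S] by blast
  then show "mod_span R M (insert x S) \<subseteq> {a \<odot>\<^bsub>M\<^esub> x \<oplus>\<^bsub>M\<^esub> s | a s. a \<in> carrier R \<and> s \<in> mod_span R M S}"
    by (rule span_least[OF lin_submodule[OF oneideal x span_submodule[OF S]]])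
  note spI = submoduleD[OF span_submodule[OF ins]]
  have "x \<in> mod_span R M (insert x S)" using span_incl[of "insert x S"] by blast
  moreover have "mod_span R M S \<subseteq> mod_span R M (insert x S)" using span_mono[OF _ ins] by blast
  ultimately show "{a \<odot>\<^bsub>M\<^esub> x \<oplus>\<^bsub>M\<^esub> s | a s. a \<in> carrier R \<and> s \<in> mod_span R M S} \<subseteq> mod_span R M (insert x S)"
    using spI(3,4) by blast
qed

lemma colon_ideal:
  assumes Q: "submodule Q R M" and x: "x \<in> carrier M" and S: "S \<subseteq> carrier M"
  shows "ideal {c \<in> carrier R. \<exists>s\<in>mod_span R M S. c \<odot>\<^bsub>M\<^esub> x \<oplus>\<^bsub>M\<^esub> s \<in> Q} R"
proof (rule idealI)
  note spS = submoduleD[OF span_submodule[OF S]] and Qc = submoduleD[OF Q]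
  let ?C = "{c \<in> carrier R. \<exists>s\<in>mod_span R M S. c \<odot>\<^bsub>M\<^esub> x \<oplus>\<^bsub>M\<^esub> s \<in> Q}"
  have closed: "a \<otimes> c \<oplus> b \<otimes> d \<in> ?C"
    if ab: "a \<in> carrier R" "b \<in> carrier R" and cd: "c \<in> ?C" "d \<in> ?C" for a b c d
  proof -
    obtain s t where st: "s \<in> mod_span R M S" "c \<odot>\<^bsub>M\<^esub> x \<oplus>\<^bsub>M\<^esub> s \<in> Q"
      "t \<in> mod_span R M S" "d \<odot>\<^bsub>M\<^esub> x \<oplus>\<^bsub>M\<^esub> t \<in> Q" using cd by auto
    have carr: "c \<in> carrier R" "d \<in> carrier R" "s \<in> carrier M" "t \<in> carrier M" using cd st spS(1) by auto
    have "a \<odot>\<^bsub>M\<^esub> (c \<odot>\<^bsub>M\<^esub> x \<oplus>\<^bsub>M\<^esub> s) \<oplus>\<^bsub>M\<^esub> b \<odot>\<^bsub>M\<^esub> (d \<odot>\<^bsub>M\<^esub> x \<oplus>\<^bsub>M\<^esub> t)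
        = (a \<otimes> c \<oplus> b \<otimes> d) \<odot>\<^bsub>M\<^esub> x \<oplus>\<^bsub>M\<^esub> (a \<odot>\<^bsub>M\<^esub> s \<oplus>\<^bsub>M\<^esub> b \<odot>\<^bsub>M\<^esub> t)"
      using ab carr x by (simp add: smult_r_distr smult_l_distr smult_assoc1 M.a_ac)
    moreover have "a \<odot>\<^bsub>M\<^esub> (c \<odot>\<^bsub>M\<^esub> x \<oplus>\<^bsub>M\<^esub> s) \<oplus>\<^bsub>M\<^esub> b \<odot>\<^bsub>M\<^esub> (d \<odot>\<^bsub>M\<^esub> x \<oplus>\<^bsub>M\<^esub> t) \<in> Q"
      using st ab Qc(3,4) by blast
    moreover have "a \<odot>\<^bsub>M\<^esub> s \<oplus>\<^bsub>M\<^esub> b \<odot>\<^bsub>M\<^esub> t \<in> mod_span R M S" using st ab spS(3,4) by blast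
    ultimately show ?thesis using ab carr by auto
  qed
  show "ring R" by (rule ring_axioms)
  have "\<zero> \<odot>\<^bsub>M\<^esub> x \<oplus>\<^bsub>M\<^esub> \<zero>\<^bsub>M\<^esub> \<in> Q" using x Qc(2) by simp
  then have zero: "\<zero> \<in> ?C" using spS(2) by blast
  show "subgroup ?C (add_monoid R)"
  proof (rule subgroup.intro)
    show "x \<otimes>\<^bsub>add_monoid R\<^esub> y \<in> ?C" if "x \<in> ?C" "y \<in> ?C" for x y
      using closed[OF R.one_closed R.one_closed that] that by simp
    show "inv\<^bsub>add_monoid R\<^esub> c \<in> ?C" if "c \<in> ?C" for c
      using closed[OF R.add.inv_closed[OF R.one_closed] R.zero_closed that zero] that
      by (simp add: a_inv_def[symmetric] l_minus)
  qed (use zero in auto)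
  show "a \<otimes> c \<in> ?C" "c \<otimes> a \<in> ?C" if "c \<in> ?C" "a \<in> carrier R" for a c
    using closed[OF that(2) R.zero_closed that(1) zero] that by (auto simp: m_comm)
qed

lemma mem_mcoset:
  assumes K: "submodule K R M" and x: "x \<in> carrier M" and y: "y \<in> carrier M"
  shows "y \<in> mcoset M K x \<longleftrightarrow> y \<ominus>\<^bsub>M\<^esub> x \<in> K"
proof
  assume "y \<in> mcoset M K x"
  then obtain k where k: "k \<in> K" "y = x \<oplus>\<^bsub>M\<^esub> k" unfolding mcoset_def by auto
  have "k \<in> carrier M" using k submoduleD(1)[OF K] by auto
  then have "y \<ominus>\<^bsub>M\<^esub> x = k" unfolding k(2) using x
    by (metis M.add.m_comm M.add.m_assoc M.r_neg M.r_zero M.add.inv_closed a_minus_def)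
  then show "y \<ominus>\<^bsub>M\<^esub> x \<in> K" using k by simp
next
  assume "y \<ominus>\<^bsub>M\<^esub> x \<in> K"
  moreover have "y = x \<oplus>\<^bsub>M\<^esub> (y \<ominus>\<^bsub>M\<^esub> x)"
    using x y M.a_comm[of y "\<ominus>\<^bsub>M\<^esub> x"] by (simp add: a_minus_def M.r_neg2)
  ultimately show "y \<in> mcoset M K x" unfolding mcoset_def by auto
qed

lemma mcoset_eq_iff:
  assumes K: "submodule K R M" and x: "x \<in> carrier M" and y: "y \<in> carrier M"
  shows "mcoset M K x = mcoset M K y \<longleftrightarrow> x \<ominus>\<^bsub>M\<^esub> y \<in> K"
proof
  have "x \<ominus>\<^bsub>M\<^esub> x \<in> K" using x submoduleD(2)[OF K] by (simp add: a_minus_def M.r_neg)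
  then have "x \<in> mcoset M K x" using mem_mcoset[OF K x x] by simp
  moreover assume "mcoset M K x = mcoset M K y"
  ultimately show "x \<ominus>\<^bsub>M\<^esub> y \<in> K" using mem_mcoset[OF K y x] by simp
next
  note Kc = submoduleD[OF K]
  assume xy: "x \<ominus>\<^bsub>M\<^esub> y \<in> K"
  have yx: "y \<ominus>\<^bsub>M\<^esub> x \<in> K"
  proof -
    have "y \<ominus>\<^bsub>M\<^esub> x = \<ominus>\<^bsub>M\<^esub> (x \<ominus>\<^bsub>M\<^esub> y)" using x y by (simp add: a_minus_def M.minus_add M.a_comm)
    then show ?thesis using Kc(5)[OF xy] by simp
  qed
  have sub: "mcoset M K u \<subseteq> mcoset M K v" if uv: "u \<ominus>\<^bsub>M\<^esub> v \<in> K" "u \<in> carrier M" "v \<in> carrier M" for u v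
  proof
    fix z assume z: "z \<in> mcoset M K u"
    have zM: "z \<in> carrier M" using z Kc(1) uv unfolding mcoset_def by auto
    have "(z \<ominus>\<^bsub>M\<^esub> u) \<oplus>\<^bsub>M\<^esub> (u \<ominus>\<^bsub>M\<^esub> v) \<in> K" using mem_mcoset[OF K uv(2) zM] z Kc(3) uv(1) by auto
    moreover have "(z \<ominus>\<^bsub>M\<^esub> u) \<oplus>\<^bsub>M\<^esub> (u \<ominus>\<^bsub>M\<^esub> v) = z \<ominus>\<^bsub>M\<^esub> v"
      using zM uv by (simp add: a_minus_def M.a_assoc M.r_neg1)
    ultimately show "z \<in> mcoset M K v" using mem_mcoset[OF K uv(3) zM] by simp
  qed
  show "mcoset M K x = mcoset M K y" using sub[OF xy x y] sub[OF yx y x] by blast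
qed

lemma mcoset_subset_iff:
  assumes K: "submodule K R M" and K': "submodule K' R M" and KK: "K' \<subseteq> K"
    and x: "x \<in> carrier M" and x': "x' \<in> carrier M"
  shows "mcoset M K' x' \<subseteq> mcoset M K x \<longleftrightarrow> x' \<ominus>\<^bsub>M\<^esub> x \<in> K"
proof
  have "x' \<ominus>\<^bsub>M\<^esub> x' \<in> K'" using x' submoduleD(2)[OF K'] by (simp add: a_minus_def M.r_neg)
  then have "x' \<in> mcoset M K' x'" using mem_mcoset[OF K' x' x'] by simp
  moreover assume "mcoset M K' x' \<subseteq> mcoset M K x"
  ultimately show "x' \<ominus>\<^bsub>M\<^esub> x \<in> K" using mem_mcoset[OF K x x'] by auto
next
  assume "x' \<ominus>\<^bsub>M\<^esub> x \<in> K"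
  then have "mcoset M K x' = mcoset M K x" using mcoset_eq_iff[OF K x' x] by simp
  moreover have "mcoset M K' x' \<subseteq> mcoset M K x'" unfolding mcoset_def using KK by auto
  ultimately show "mcoset M K' x' \<subseteq> mcoset M K x" by simp
qed

end

section \<open>Finitely generated modules over a noetherian ring\<close>

lemma chain_finite_subset_member:
  assumes C: "subset.chain F C" "C \<noteq> {}" and T: "finite T" "T \<subseteq> \<Union>C"
  shows "\<exists>X\<in>C. T \<subseteq> X"
  using T
proof (induction T rule: finite_induct)
  case (insert t T)
  then obtain X where X: "X \<in> C" "T \<subseteq> X" by auto
  obtain Y where Y: "Y \<in> C" "t \<in> Y" using insert.prems by auto
  have "X \<subseteq> Y \<or> Y \<subseteq> X" using C X Y unfolding pred_on.chain_def by blast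
  then show ?case using X Y by blast
qed (use C in auto)

context Rmodule begin

lemma submodule_subset_span_insert:
  assumes N: "submodule N R M" and S: "S \<subseteq> carrier M" and x: "x \<in> carrier M"
    and N_sub: "N \<subseteq> mod_span R M (insert x S)"
    and G: "G \<subseteq> N" and T0: "T0 \<subseteq> N" and N_S: "N \<inter> mod_span R M S \<subseteq> mod_span R M T0"
    and colon: "{c \<in> carrier R. \<exists>s\<in>mod_span R M S. c \<odot>\<^bsub>M\<^esub> x \<oplus>\<^bsub>M\<^esub> s \<in> N}
      \<subseteq> {c \<in> carrier R. \<exists>s\<in>mod_span R M S. c \<odot>\<^bsub>M\<^esub> x \<oplus>\<^bsub>M\<^esub> s \<in> mod_span R M G}"
  shows "N \<subseteq> mod_span R M (T0 \<union> G)"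
proof
  note Nc = submoduleD[OF N] and spS = submoduleD[OF span_submodule[OF S]]
  have TM: "T0 \<union> G \<subseteq> carrier M" using G T0 Nc(1) by auto
  note spT = submoduleD[OF span_submodule[OF TM]]
  fix y assume y: "y \<in> N"
  then obtain c s where cs: "c \<in> carrier R" "s \<in> mod_span R M S" "y = c \<odot>\<^bsub>M\<^esub> x \<oplus>\<^bsub>M\<^esub> s"
    using N_sub span_insert[OF S x] by auto
  then obtain s' where s': "s' \<in> mod_span R M S" "c \<odot>\<^bsub>M\<^esub> x \<oplus>\<^bsub>M\<^esub> s' \<in> mod_span R M G"
    using colon y by blast
  define z where "z = c \<odot>\<^bsub>M\<^esub> x \<oplus>\<^bsub>M\<^esub> s'"
  have zN: "z \<in> N" using s' span_least[OF N G] unfolding z_def by auto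
  have zT: "z \<in> mod_span R M (T0 \<union> G)" using s' span_mono[OF _ TM, of G] unfolding z_def by auto
  have sM: "s \<in> carrier M" "s' \<in> carrier M" using cs s' spS(1) by auto
  have "y \<ominus>\<^bsub>M\<^esub> z = s \<ominus>\<^bsub>M\<^esub> s'"
    unfolding cs(3) z_def using cs(1) x sM by (simp add: a_minus_def M.minus_add M.a_ac M.r_neg M.r_neg2)
  then have "y \<ominus>\<^bsub>M\<^esub> z \<in> N \<inter> mod_span R M S" using Nc(6)[OF y zN] spS(6) cs(2) s'(1) by simp
  then have "y \<ominus>\<^bsub>M\<^esub> z \<in> mod_span R M (T0 \<union> G)" using N_S span_mono[OF _ TM, of T0] by auto
  then have "(y \<ominus>\<^bsub>M\<^esub> z) \<oplus>\<^bsub>M\<^esub> z \<in> mod_span R M (T0 \<union> G)" using zT spT(3) by blast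
  moreover have "(y \<ominus>\<^bsub>M\<^esub> z) \<oplus>\<^bsub>M\<^esub> z = y" using y zN Nc(1) by (simp add: M.a_minus_add_cancel subsetD)
  ultimately show "y \<in> mod_span R M (T0 \<union> G)" by simp
qed

end

locale noetherian_Rmodule = Rmodule + noetherian_ring R

context noetherian_Rmodule begin

lemma submodule_of_fin_span_fin_gen:
  assumes "finite S"
  shows "S \<subseteq> carrier M \<Longrightarrow> submodule N R M \<Longrightarrow> N \<subseteq> mod_span R M S \<Longrightarrow>
    \<exists>T. finite T \<and> T \<subseteq> N \<and> N = mod_span R M T"
  using assms
proof (induction S arbitrary: N rule: finite_induct)
  case empty
  then have "N = {\<zero>\<^bsub>M\<^esub>}" using span_empty submoduleD(2)[OF empty(2)] by auto
  then show ?case using span_empty by auto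
next
  case (insert x S)
  have S: "S \<subseteq> carrier M" and x: "x \<in> carrier M" using insert.prems by auto
  note N = insert.prems(2)
  define J where "J = {c \<in> carrier R. \<exists>s\<in>mod_span R M S. c \<odot>\<^bsub>M\<^esub> x \<oplus>\<^bsub>M\<^esub> s \<in> N}"
  obtain A where A: "A \<subseteq> carrier R" "finite A" "J = Idl A"
    using finetely_gen[OF colon_ideal[OF N x S]] unfolding J_def by auto
  have "\<forall>a\<in>A. \<exists>s. s \<in> mod_span R M S \<and> a \<odot>\<^bsub>M\<^esub> x \<oplus>\<^bsub>M\<^esub> s \<in> N"
    using A genideal_self unfolding J_def by blast
  then obtain sa where sa: "\<And>a. a \<in> A \<Longrightarrow> sa a \<in> mod_span R M S \<and> a \<odot>\<^bsub>M\<^esub> x \<oplus>\<^bsub>M\<^esub> sa a \<in> N"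
    by metis
  define G where "G = (\<lambda>a. a \<odot>\<^bsub>M\<^esub> x \<oplus>\<^bsub>M\<^esub> sa a) ` A"
  have GN: "G \<subseteq> N" using sa unfolding G_def by auto
  obtain T0 where T0: "finite T0" "T0 \<subseteq> N \<inter> mod_span R M S" "N \<inter> mod_span R M S = mod_span R M T0"
    using insert.IH[OF S submodule_Int[OF N span_submodule[OF S]]] by auto
  have GM: "G \<subseteq> carrier M" using GN submoduleD(1)[OF N] by auto
  let ?J' = "{c \<in> carrier R. \<exists>s\<in>mod_span R M S. c \<odot>\<^bsub>M\<^esub> x \<oplus>\<^bsub>M\<^esub> s \<in> mod_span R M G}"
  have "A \<subseteq> ?J'" using sa span_incl[of G] A(1) unfolding G_def by blast
  then have "J \<subseteq> ?J'" using A(3) genideal_minimal[OF colon_ideal[OF span_submodule[OF GM] x S]] by auto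
  then have "N \<subseteq> mod_span R M (T0 \<union> G)"
    using submodule_subset_span_insert[OF N S x insert.prems(3) GN _ equalityD1[OF T0(3)]] T0(2)
    unfolding J_def by blast
  moreover have "mod_span R M (T0 \<union> G) \<subseteq> N" using span_least[OF N] T0(2) GN by blast
  moreover have "finite (T0 \<union> G)" using T0(1) A(2) unfolding G_def by auto
  ultimately show ?case using T0(2) GN by (intro exI[of _ "T0 \<union> G"]) auto
qed

end

locale fg_noetherian_Rmodule = noetherian_Rmodule +
  assumes fin_gen: "fin_gen_module R M"

context fg_noetherian_Rmodule begin

lemma submodule_fin_gen:
  assumes "submodule N R M"
  shows "\<exists>T. finite T \<and> T \<subseteq> N \<and> N = mod_span R M T"
proof -
  obtain S where S: "S \<subseteq> carrier M" "finite S" "mod_span R M S = carrier M"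
    using fin_gen unfolding fin_gen_module_def by auto
  show ?thesis using submodule_of_fin_span_fin_gen[OF S(2) S(1) assms] submoduleD(1)[OF assms] S(3) by auto
qed

lemma submodule_family_maximal:
  assumes "F \<noteq> {}" "\<And>P. P \<in> F \<Longrightarrow> submodule P R M"
  shows "\<exists>P\<in>F. \<forall>Q\<in>F. P \<subseteq> Q \<longrightarrow> Q = P"
proof (rule subset_Zorn)
  fix C assume C: "subset.chain F C"
  show "\<exists>U\<in>F. \<forall>X\<in>C. X \<subseteq> U"
  proof (cases "C = {}")
    case True then show ?thesis using assms(1) by auto
  next
    case False
    have CF: "C \<subseteq> F" using C unfolding pred_on.chain_def by auto
    obtain T where T: "finite T" "T \<subseteq> \<Union>C" "\<Union>C = mod_span R M T"
      using submodule_fin_gen[OF submodule_Union_chain[OF C False assms(2)]] by auto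
    obtain X where X: "X \<in> C" "T \<subseteq> X" using chain_finite_subset_member[OF C False T(1,2)] by auto
    have "\<Union>C \<subseteq> X" using T(3) span_least[OF assms(2) X(2)] X(1) CF by auto
    then show ?thesis using X(1) CF by auto
  qed
qed

end

section \<open>Nakayama's lemma and Krull's intersection theorem\<close>

context Rmodule begin

lemma jacobson_fixed_point:
  assumes a: "a \<in> jacobson_radical R" and P: "submodule P R M" and x: "x \<in> carrier M"
    and s: "s \<in> P" and eq: "x = a \<odot>\<^bsub>M\<^esub> x \<oplus>\<^bsub>M\<^esub> s"
  shows "x \<in> P"
proof -
  have aR: "a \<in> carrier R" using a unfolding jacobson_radical_def by auto
  have sM: "s \<in> carrier M" using s submoduleD(1)[OF P] by auto
  obtain v where v: "v \<in> carrier R" "v \<otimes> (\<one> \<ominus> a) = \<one>" using jacobson_radical_one_minus_unit[OF a] by blast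
  have "(\<one> \<ominus> a) \<odot>\<^bsub>M\<^esub> x = x \<ominus>\<^bsub>M\<^esub> a \<odot>\<^bsub>M\<^esub> x"
    using aR x by (simp add: a_minus_def smult_l_distr smult_l_minus)
  also have "\<dots> = (a \<odot>\<^bsub>M\<^esub> x \<oplus>\<^bsub>M\<^esub> s) \<ominus>\<^bsub>M\<^esub> a \<odot>\<^bsub>M\<^esub> x"
    using eq by (rule arg_cong)
  also have "\<dots> = s" using aR x sM by (simp add: M.a_add_minus_cancel_left)
  finally have "(\<one> \<ominus> a) \<odot>\<^bsub>M\<^esub> x = s" .
  moreover have "(v \<otimes> (\<one> \<ominus> a)) \<odot>\<^bsub>M\<^esub> x = v \<odot>\<^bsub>M\<^esub> ((\<one> \<ominus> a) \<odot>\<^bsub>M\<^esub> x)"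
    by (rule smult_assoc1) (use v aR x in auto)
  ultimately have "x = v \<odot>\<^bsub>M\<^esub> s" using v x by simp
  then show ?thesis using submoduleD(4)[OF P v(1) s] by simp
qed

lemma ideal_smult_span_insert_subset:
  assumes J: "ideal J R" and S: "S \<subseteq> carrier M" and x: "x \<in> carrier M"
  shows "ideal_smult R M J (mod_span R M (insert x S))
    \<subseteq> {a \<odot>\<^bsub>M\<^esub> x \<oplus>\<^bsub>M\<^esub> s | a s. a \<in> J \<and> s \<in> mod_span R M S}"
proof (rule ideal_smult_least[OF lin_submodule[OF J x span_submodule[OF S]]])
  note spS = submoduleD[OF span_submodule[OF S]]
  fix r p assume r: "r \<in> J" and "p \<in> mod_span R M (insert x S)"
  then obtain c s where cs: "c \<in> carrier R" "s \<in> mod_span R M S" "p = c \<odot>\<^bsub>M\<^esub> x \<oplus>\<^bsub>M\<^esub> s"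
    using span_insert[OF S x] by auto
  have rR: "r \<in> carrier R" using r J ideal.axioms(1) additive_subgroup.a_subset by blast
  have "r \<odot>\<^bsub>M\<^esub> p = (r \<otimes> c) \<odot>\<^bsub>M\<^esub> x \<oplus>\<^bsub>M\<^esub> (r \<odot>\<^bsub>M\<^esub> s)"
    unfolding cs(3) using cs x rR spS(1) by (simp add: smult_r_distr smult_assoc1 subsetD)
  moreover have "r \<otimes> c \<in> J" using ideal.I_r_closed[OF J r cs(1)] .
  moreover have "r \<odot>\<^bsub>M\<^esub> s \<in> mod_span R M S" using spS(4) rR cs(2) by blast
  ultimately show "r \<odot>\<^bsub>M\<^esub> p \<in> {a \<odot>\<^bsub>M\<^esub> x \<oplus>\<^bsub>M\<^esub> s | a s. a \<in> J \<and> s \<in> mod_span R M S}" by blast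
qed

lemma nakayama:
  assumes J: "ideal J R" "J \<subseteq> jacobson_radical R" and S: "finite S"
  shows "S \<subseteq> carrier M \<Longrightarrow> mod_span R M S \<subseteq> ideal_smult R M J (mod_span R M S) \<Longrightarrow>
    mod_span R M S = {\<zero>\<^bsub>M\<^esub>}"
  using S
proof (induction S rule: finite_induct)
  case empty then show ?case using span_empty by simp
next
  case (insert x S)
  have S: "S \<subseteq> carrier M" and x: "x \<in> carrier M" and ins: "insert x S \<subseteq> carrier M"
    using insert.prems by auto
  have "x \<in> mod_span R M (insert x S)" using span_incl[of "insert x S"] by blast
  then obtain a s where as: "a \<in> J" "s \<in> mod_span R M S" "x = a \<odot>\<^bsub>M\<^esub> x \<oplus>\<^bsub>M\<^esub> s"
    using insert.prems(2) ideal_smult_span_insert_subset[OF J(1) S x] by blast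
  have "x \<in> mod_span R M S" using jacobson_fixed_point[OF _ span_submodule[OF S] x as(2,3)] as(1) J(2) by blast
  then have "mod_span R M (insert x S) = mod_span R M S"
    using span_least[OF span_submodule[OF S], of "insert x S"] span_incl[of S] span_mono[OF _ ins, of S]
    by blast
  then show ?case using insert.IH[OF S] insert.prems(2) by simp
qed

end

context fg_noetherian_Rmodule begin

lemma power_colon_stable:
  assumes P: "submodule P R M" and L: "submodule L R M" and a: "a \<in> carrier R"
  shows "\<exists>m. \<forall>p\<in>P. (a [^] Suc m) \<odot>\<^bsub>M\<^esub> p \<in> L \<longrightarrow> (a [^] m) \<odot>\<^bsub>M\<^esub> p \<in> L"
proof -
  note Pc = submoduleD[OF P] and Lc = submoduleD[OF L]
  define C where "C = (\<lambda>m::nat. {p \<in> P. (a [^] m) \<odot>\<^bsub>M\<^esub> p \<in> L})"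
  have C_sub: "submodule (C m) R M" for m
  proof (rule submoduleI')
    have amR: "a [^] m \<in> carrier R" using a by simp
    show "C m \<subseteq> carrier M" unfolding C_def using Pc(1) by auto
    show "\<zero>\<^bsub>M\<^esub> \<in> C m" unfolding C_def using Pc(2) Lc(2) amR by simp
    show "x \<oplus>\<^bsub>M\<^esub> y \<in> C m" if "x \<in> C m" "y \<in> C m" for x y
      using that Pc(1,3) Lc(3) amR unfolding C_def by (auto simp: smult_r_distr subsetD)
    show "r \<odot>\<^bsub>M\<^esub> x \<in> C m" if "r \<in> carrier R" "x \<in> C m" for r x
    proof -
      have x: "x \<in> P" "(a [^] m) \<odot>\<^bsub>M\<^esub> x \<in> L" "x \<in> carrier M" using that Pc(1) unfolding C_def by auto
      have "(a [^] m) \<odot>\<^bsub>M\<^esub> (r \<odot>\<^bsub>M\<^esub> x) = r \<odot>\<^bsub>M\<^esub> ((a [^] m) \<odot>\<^bsub>M\<^esub> x)"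
        using x amR that(1) by (simp add: smult_assoc1[symmetric] m_comm)
      then show ?thesis unfolding C_def using x that(1) Pc(4) Lc(4) by auto
    qed
  qed
  have "\<exists>X\<in>range C. \<forall>Y\<in>range C. X \<subseteq> Y \<longrightarrow> Y = X"
    by (intro submodule_family_maximal) (use C_sub in auto)
  then obtain m where m: "\<And>X. X \<in> range C \<Longrightarrow> C m \<subseteq> X \<Longrightarrow> X = C m" by blast
  have "C m \<subseteq> C (Suc m)"
  proof
    fix p assume "p \<in> C m"
    then have p: "p \<in> P" "(a [^] m) \<odot>\<^bsub>M\<^esub> p \<in> L" "p \<in> carrier M" unfolding C_def using Pc(1) by auto
    have "(a [^] Suc m) \<odot>\<^bsub>M\<^esub> p = a \<odot>\<^bsub>M\<^esub> ((a [^] m) \<odot>\<^bsub>M\<^esub> p)"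
      unfolding nat_pow_Suc2[OF a] using p(3) a by (simp add: smult_assoc1)
    then show "p \<in> C (Suc m)" unfolding C_def using p Lc(4)[OF a] by auto
  qed
  then have "C (Suc m) = C m" using m by blast
  then show ?thesis unfolding C_def by blast
qed

text \<open>Take \<open>m\<close> where the colon chain \<open>(L : a\<^sup>m)\<close> stabilises. Then \<open>L + a\<^sup>m P\<close> still meets \<open>N\<close> in \<open>J N\<close>
  (multiply by \<open>a\<close>), so \<open>a\<^sup>m P \<subseteq> L\<close> by maximality of \<open>L\<close>.\<close>
lemma maximal_complement_absorbs_powers:
  assumes J: "ideal J R" and aJ: "a \<in> J" and P: "submodule P R M" and N: "submodule N R M"
    and L: "submodule L R M" "L \<subseteq> P" "L \<inter> N = ideal_smult R M J N"
    and L_max: "\<And>L'. submodule L' R M \<Longrightarrow> L' \<subseteq> P \<Longrightarrow> L' \<inter> N = ideal_smult R M J N \<Longrightarrow> L \<subseteq> L' \<Longrightarrow> L' = L"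
  shows "\<exists>m::nat. \<forall>p\<in>P. (a [^] m) \<odot>\<^bsub>M\<^esub> p \<in> L"
proof -
  note Pc = submoduleD[OF P] and Lc = submoduleD[OF L(1)]
  have aR: "a \<in> carrier R" using aJ J ideal.axioms(1) additive_subgroup.a_subset by blast
  obtain m where m: "\<And>p. p \<in> P \<Longrightarrow> (a [^] Suc m) \<odot>\<^bsub>M\<^esub> p \<in> L \<Longrightarrow> (a [^] m) \<odot>\<^bsub>M\<^esub> p \<in> L"
    using power_colon_stable[OF P L(1) aR] by blast
  define aP where "aP = {(a [^] m) \<odot>\<^bsub>M\<^esub> p | p. p \<in> P}"
  have aP_sub: "submodule aP R M" unfolding aP_def by (rule smult_image_submodule[OF P]) (use aR in simp)
  define L' where "L' = submodule_sum L aP"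
  have L'_sub: "submodule L' R M" unfolding L'_def by (rule submodule_sum_submodule[OF L(1) aP_sub])
  have LL': "L \<subseteq> L'" unfolding L'_def by (rule submodule_sum_upper1[OF aP_sub Lc(1)])
  have aPL': "aP \<subseteq> L'" unfolding L'_def by (rule submodule_sum_upper2[OF L(1) submoduleD(1)[OF aP_sub]])
  have L'P: "L' \<subseteq> P" unfolding L'_def aP_def using L(2) Pc(4) aR by (intro submodule_sum_least[OF _ _ P]) auto
  have "L' \<inter> N \<subseteq> L"
  proof
    fix y assume y: "y \<in> L' \<inter> N"
    then obtain l p where lp: "l \<in> L" "p \<in> P" "y = l \<oplus>\<^bsub>M\<^esub> (a [^] m) \<odot>\<^bsub>M\<^esub> p"
      unfolding L'_def submodule_sum_def aP_def by blast
    have lM: "l \<in> carrier M" and pM: "p \<in> carrier M" using lp Lc(1) Pc(1) by auto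
    have "a \<odot>\<^bsub>M\<^esub> y \<in> L" using ideal_smultI[OF aJ, of y N] y L(3) by auto
    moreover have "a \<odot>\<^bsub>M\<^esub> y = a \<odot>\<^bsub>M\<^esub> l \<oplus>\<^bsub>M\<^esub> (a [^] Suc m) \<odot>\<^bsub>M\<^esub> p"
      unfolding lp(3) nat_pow_Suc2[OF aR] using lM pM aR by (simp add: smult_r_distr smult_assoc1)
    ultimately have "(a [^] Suc m) \<odot>\<^bsub>M\<^esub> p \<in> L"
      using submodule_add_cancel[OF L(1) Lc(4)[OF aR lp(1)]] pM aR by auto
    then show "y \<in> L" using m[OF lp(2)] lp Lc(3) by simp
  qed
  moreover have "ideal_smult R M J N \<subseteq> N"
    using ideal_smult_subset[OF _ N] J ideal.axioms(1) additive_subgroup.a_subset by blast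
  ultimately have "L' \<inter> N = ideal_smult R M J N" using L(3) LL' by blast
  then have "L' = L" by (rule L_max[OF L'_sub L'P _ LL'])
  moreover have "(a [^] m) \<odot>\<^bsub>M\<^esub> p \<in> aP" if "p \<in> P" for p using that unfolding aP_def by blast
  ultimately show ?thesis using aPL' by (intro exI[of _ m]) auto
qed

theorem krull_intersection:
  assumes J: "ideal J R" "J \<subseteq> jacobson_radical R" and P: "submodule P R M"
  shows "(\<Inter>n. ideal_smult R M (ideal_power R J n) P) = {\<zero>\<^bsub>M\<^esub>}"
proof -
  note Pc = submoduleD[OF P]
  have JR: "J \<subseteq> carrier R" using J(1) ideal.axioms(1) additive_subgroup.a_subset by blast
  define N where "N = (\<Inter>n. ideal_smult R M (ideal_power R J n) P)"
  have N_sub: "submodule N R M"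
    unfolding N_def by (rule submodule_INT[OF ideal_smult_submodule[OF ideal_power_carrier[OF J(1)] Pc(1)]])
  have "ideal_smult R M (ideal_power R J 0) P = P" using ideal_smult_carrier[OF P] by simp
  then have NP: "N \<subseteq> P" unfolding N_def by blast
  define JN where "JN = ideal_smult R M J N"
  have JN_N: "JN \<subseteq> N" unfolding JN_def by (rule ideal_smult_subset[OF JR N_sub])
  define F where "F = {L. submodule L R M \<and> L \<subseteq> P \<and> L \<inter> N = JN}"
  have "submodule JN R M" unfolding JN_def by (rule ideal_smult_submodule[OF JR submoduleD(1)[OF N_sub]])
  then have "JN \<in> F" unfolding F_def using JN_N NP by auto
  then have "F \<noteq> {}" by blast
  moreover have "submodule X R M" if "X \<in> F" for X using that unfolding F_def by blast
  ultimately have "\<exists>L\<in>F. \<forall>X\<in>F. L \<subseteq> X \<longrightarrow> X = L" by (rule submodule_family_maximal)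
  then obtain L where "L \<in> F" and L_max: "\<And>X. X \<in> F \<Longrightarrow> L \<subseteq> X \<Longrightarrow> X = L" by blast
  then have L: "submodule L R M" "L \<subseteq> P" "L \<inter> N = JN" unfolding F_def by auto
  obtain A where A: "A \<subseteq> carrier R" "finite A" "J = Idl A" using finetely_gen[OF J(1)] by auto
  define Q where "Q = {r \<in> carrier R. \<forall>p\<in>P. r \<odot>\<^bsub>M\<^esub> p \<in> L}"
  have Q: "ideal Q R" unfolding Q_def
    using Pc(1) submoduleD(2-4)[OF L(1)] by (intro cring_idealI) (auto simp: smult_l_distr smult_assoc1 subsetD)
  have "\<exists>m::nat. a [^] m \<in> Q" if a: "a \<in> A" for a
  proof -
    have "a \<in> J" using a genideal_self[OF A(1)] A(3) by auto
    then obtain m :: nat where "\<forall>p\<in>P. (a [^] m) \<odot>\<^bsub>M\<^esub> p \<in> L"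
      using maximal_complement_absorbs_powers[OF J(1) _ P N_sub L(1,2) L(3)[unfolded JN_def]] L_max
      unfolding F_def JN_def by blast
    then show ?thesis using a A(1) unfolding Q_def by (intro exI[of _ m]) auto
  qed
  then obtain k where "ideal_power R J k \<subseteq> Q" using ideal_power_subset_of_gen_powers[OF A(2,1) Q] A(3) by auto
  then have "ideal_smult R M (ideal_power R J k) P \<subseteq> L" unfolding Q_def by (intro ideal_smult_least[OF L(1)]) auto
  then have "N \<subseteq> JN" using L(3) unfolding N_def by blast
  obtain T where T: "finite T" "T \<subseteq> N" "N = mod_span R M T" using submodule_fin_gen[OF N_sub] by auto
  have "mod_span R M T = {\<zero>\<^bsub>M\<^esub>}"
    using nakayama[OF J T(1)] T submoduleD(1)[OF N_sub] \<open>N \<subseteq> JN\<close> unfolding JN_def by auto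
  then show ?thesis using T(3) unfolding N_def by simp
qed

end

section \<open>The \<open>I\<close>-adic completion of \<open>R\<close>\<close>

context cring begin

lemma ring_module_simps:
  "carrier (ring_module R) = carrier R"
  "add (ring_module R) = add R"
  "zero (ring_module R) = zero R"
  "smult (ring_module R) = monoid.mult R"
  by (simp_all add: ring_module_def)

lemma ring_module_a_minus: "a_minus (ring_module R) = a_minus R"
  unfolding a_minus_def[abs_def] a_inv_def m_inv_def[abs_def] by (simp add: ring_module_def)

lemma Rmodule_ring_module: "Rmodule R (ring_module R)"
  unfolding Rmodule_def
proof (rule moduleI)
  show "cring R" by (rule is_cring)
  show "abelian_group (ring_module R)"
    by (rule abelian_groupI) (auto simp: ring_module_simps a_ac intro: l_neg)
qed (simp_all add: ring_module_simps l_distr r_distr m_assoc)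

lemma coset_image_add:
  assumes K: "ideal K R" and a: "a \<in> carrier R" and b: "b \<in> carrier R"
  shows "{u \<oplus> v | u v. u \<in> (\<lambda>y. a \<oplus> y) ` K \<and> v \<in> (\<lambda>y. b \<oplus> y) ` K} = (\<lambda>y. (a \<oplus> b) \<oplus> y) ` K"
proof -
  note Ksub = ideal.axioms(1)[OF K]
  have KR: "K \<subseteq> carrier R" using additive_subgroup.a_subset[OF Ksub] .
  have "(a \<oplus> i) \<oplus> (b \<oplus> j) = (a \<oplus> b) \<oplus> (i \<oplus> j)" if "i \<in> K" "j \<in> K" for i j
    using that a b KR by (simp add: a_ac subsetD)
  moreover have "(a \<oplus> b) \<oplus> i = (a \<oplus> i) \<oplus> (b \<oplus> \<zero>)" if "i \<in> K" for i
    using that a b KR by (simp add: a_ac subsetD)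
  ultimately show ?thesis
    using additive_subgroup.a_closed[OF Ksub] additive_subgroup.zero_closed[OF Ksub] by blast
qed

lemma coset_image_mult:
  assumes K: "ideal K R" and a: "a \<in> carrier R" and r: "r \<in> carrier R"
  shows "{r \<otimes> u \<oplus> v | u v. u \<in> (\<lambda>y. a \<oplus> y) ` K \<and> v \<in> K} = (\<lambda>y. (r \<otimes> a) \<oplus> y) ` K"
proof -
  note Ksub = ideal.axioms(1)[OF K]
  have KR: "K \<subseteq> carrier R" using additive_subgroup.a_subset[OF Ksub] .
  have "r \<otimes> (a \<oplus> i) \<oplus> j = (r \<otimes> a) \<oplus> (r \<otimes> i \<oplus> j)" if "i \<in> K" "j \<in> K" for i j
    using that a r KR by (simp add: r_distr a_assoc subsetD)
  moreover have "r \<otimes> i \<oplus> j \<in> K" if "i \<in> K" "j \<in> K" for i j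
    using that additive_subgroup.a_closed[OF Ksub] ideal.I_l_closed[OF K _ r] by blast
  moreover have "a = a \<oplus> \<zero>" using a by simp
  ultimately show ?thesis
    using additive_subgroup.zero_closed[OF Ksub] by blast
qed

end

locale adic_ring = cring R for R (structure) +
  fixes I
  assumes ideal_I: "ideal I R"
begin

abbreviation Ipow where "Ipow n \<equiv> ideal_power R I n"

lemma Ipow_ideal: "ideal (Ipow n) R"
  by (rule ideal_power_ideal[OF ideal_I])

lemma Ipow_carrier: "Ipow n \<subseteq> carrier R"
  by (rule ideal_power_carrier[OF ideal_I])

lemma Ipow_zero: "\<zero> \<in> Ipow n"
  using additive_subgroup.zero_closed[OF ideal.axioms(1)[OF Ipow_ideal]] .

lemma Ipow_add: "a \<in> Ipow n \<Longrightarrow> b \<in> Ipow n \<Longrightarrow> a \<oplus> b \<in> Ipow n"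
  using additive_subgroup.a_closed[OF ideal.axioms(1)[OF Ipow_ideal]] .

lemma Ipow_minus: "a \<in> Ipow n \<Longrightarrow> b \<in> Ipow n \<Longrightarrow> a \<ominus> b \<in> Ipow n"
  unfolding a_minus_def using Ipow_add additive_subgroup.a_inv_closed[OF ideal.axioms(1)[OF Ipow_ideal]] by blast

lemma Ipow_mult: "r \<in> carrier R \<Longrightarrow> a \<in> Ipow n \<Longrightarrow> r \<otimes> a \<in> Ipow n"
  using ideal.I_l_closed[OF Ipow_ideal] by blast

interpretation RM: Rmodule R "ring_module R" by (rule Rmodule_ring_module)

lemma Ipow_submodule: "submodule (Ipow n) R (ring_module R)"
  using Ipow_carrier Ipow_zero Ipow_add Ipow_mult by (intro RM.submoduleI') (auto simp: ring_module_simps)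

lemma ideal_smult_ring_module: "ideal_smult R (ring_module R) (Ipow n) (carrier (ring_module R)) = Ipow n"
proof
  show "ideal_smult R (ring_module R) (Ipow n) (carrier (ring_module R)) \<subseteq> Ipow n"
    by (rule RM.ideal_smult_least[OF Ipow_submodule]) (use Ipow_ideal[of n] in \<open>auto simp: ring_module_simps ideal.I_r_closed\<close>)
  show "Ipow n \<subseteq> ideal_smult R (ring_module R) (Ipow n) (carrier (ring_module R))"
  proof
    fix r assume r: "r \<in> Ipow n"
    have "r \<odot>\<^bsub>ring_module R\<^esub> \<one> \<in> ideal_smult R (ring_module R) (Ipow n) (carrier (ring_module R))"
      by (rule RM.ideal_smultI[OF r]) (simp add: ring_module_simps)
    then show "r \<in> ideal_smult R (ring_module R) (Ipow n) (carrier (ring_module R))"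
      using r Ipow_carrier[of n] by (auto simp: ring_module_simps subsetD)
  qed
qed

lemma mcoset_ring_module: "mcoset (ring_module R) K a = (\<lambda>y. a \<oplus> y) ` K"
  unfolding mcoset_def by (simp add: ring_module_simps)

lemma mcoset_Ipow_eq_iff:
  "x \<in> carrier R \<Longrightarrow> y \<in> carrier R \<Longrightarrow>
    mcoset (ring_module R) (Ipow k) x = mcoset (ring_module R) (Ipow k) y \<longleftrightarrow> x \<ominus> y \<in> Ipow k"
  using RM.mcoset_eq_iff[OF Ipow_submodule, of x y] by (simp add: ring_module_simps ring_module_a_minus)

lemma mcoset_Ipow_Suc_subset_iff:
  "x \<in> carrier R \<Longrightarrow> y \<in> carrier R \<Longrightarrow>
    mcoset (ring_module R) (Ipow (Suc k)) y \<subseteq> mcoset (ring_module R) (Ipow k) x \<longleftrightarrow> y \<ominus> x \<in> Ipow k"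
  using RM.mcoset_subset_iff[OF Ipow_submodule Ipow_submodule ideal_power_Suc_subset[OF ideal_I], of x y]
  by (simp add: ring_module_simps ring_module_a_minus)

text \<open>Elements of \<open>R\<^sup>\<and>\<close> are represented by \<open>I\<close>-adic Cauchy sequences in \<open>R\<close>.\<close>
definition adic_seq :: "(nat \<Rightarrow> 'a) \<Rightarrow> bool" where
  "adic_seq x \<longleftrightarrow> (\<forall>k. x k \<in> carrier R) \<and> (\<forall>k. x (Suc k) \<ominus> x k \<in> Ipow k)"

definition completion_elem :: "(nat \<Rightarrow> 'a) \<Rightarrow> nat \<Rightarrow> 'a set" where
  "completion_elem x = (\<lambda>k. mcoset (ring_module R) (Ipow k) (x k))"

lemma adic_seq_carrier: "adic_seq x \<Longrightarrow> x k \<in> carrier R"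
  unfolding adic_seq_def by blast

lemma adic_seq_diff: "adic_seq x \<Longrightarrow> x (Suc k) \<ominus> x k \<in> Ipow k"
  unfolding adic_seq_def by blast

lemma adic_seqI: "(\<And>k. x k \<in> carrier R) \<Longrightarrow> (\<And>k. x (Suc k) \<ominus> x k \<in> Ipow k) \<Longrightarrow> adic_seq x"
  unfolding adic_seq_def by blast

lemma adic_seq_const: "a \<in> carrier R \<Longrightarrow> adic_seq (\<lambda>k. a)"
  by (rule adic_seqI) (auto simp: Ipow_zero a_minus_def r_neg)

lemma adic_seq_add: "adic_seq x \<Longrightarrow> adic_seq y \<Longrightarrow> adic_seq (\<lambda>k. x k \<oplus> y k)"
  by (rule adic_seqI) (auto simp: adic_seq_carrier a_add_minus_add adic_seq_diff intro!: Ipow_add)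

lemma adic_seq_minus: "adic_seq x \<Longrightarrow> adic_seq y \<Longrightarrow> adic_seq (\<lambda>k. x k \<ominus> y k)"
proof (rule adic_seqI)
  assume x: "adic_seq x" and y: "adic_seq y"
  show "x k \<ominus> y k \<in> carrier R" for k using adic_seq_carrier[OF x] adic_seq_carrier[OF y] by simp
  fix k
  have "(x (Suc k) \<ominus> y (Suc k)) \<ominus> (x k \<ominus> y k) = (x (Suc k) \<ominus> x k) \<ominus> (y (Suc k) \<ominus> y k)"
    using adic_seq_carrier[OF x] adic_seq_carrier[OF y] by (simp add: a_minus_def minus_add a_ac)
  then show "(x (Suc k) \<ominus> y (Suc k)) \<ominus> (x k \<ominus> y k) \<in> Ipow k"
    using Ipow_minus[OF adic_seq_diff[OF x] adic_seq_diff[OF y]] by simp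
qed

lemma adic_seq_mult: "r \<in> carrier R \<Longrightarrow> adic_seq x \<Longrightarrow> adic_seq (\<lambda>k. r \<otimes> x k)"
proof (rule adic_seqI)
  assume r: "r \<in> carrier R" and x: "adic_seq x"
  show "r \<otimes> x k \<in> carrier R" for k using r adic_seq_carrier[OF x] by simp
  fix k
  have "r \<otimes> x (Suc k) \<ominus> r \<otimes> x k = r \<otimes> (x (Suc k) \<ominus> x k)"
    using r adic_seq_carrier[OF x] by (simp add: a_minus_def r_distr r_minus)
  then show "r \<otimes> x (Suc k) \<ominus> r \<otimes> x k \<in> Ipow k" using Ipow_mult[OF r adic_seq_diff[OF x]] by simp
qed

lemma adic_seq_tail: "adic_seq x \<Longrightarrow> x (k + j) \<ominus> x k \<in> Ipow k"
proof (induction j)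
  case 0 then show ?case using adic_seq_carrier[OF 0] Ipow_zero by (simp add: a_minus_def r_neg)
next
  case (Suc j)
  have "x (k + Suc j) \<ominus> x k = (x (Suc (k + j)) \<ominus> x (k + j)) \<oplus> (x (k + j) \<ominus> x k)"
    using a_minus_chain adic_seq_carrier[OF Suc.prems] by simp
  moreover have "x (Suc (k + j)) \<ominus> x (k + j) \<in> Ipow k"
    using adic_seq_diff[OF Suc.prems, of "k + j"] ideal_power_antimono[OF ideal_I, of k "k + j"] by auto
  ultimately show ?case using Ipow_add Suc by simp
qed

abbreviation completion where "completion \<equiv> ring_completion R I"

lemma completion_carrier:
  "carrier completion = {c. (\<forall>n. \<exists>x\<in>carrier R. c n = mcoset (ring_module R) (Ipow n) x) \<and> (\<forall>n. c (Suc n) \<subseteq> c n)}"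
  unfolding ring_completion_def adic_completion_def adic_invlim_def Let_def
  using ideal_smult_ring_module by (simp add: ring_module_simps)

lemma completion_add: "x \<oplus>\<^bsub>completion\<^esub> y = (\<lambda>n. {u \<oplus> v | u v. u \<in> x n \<and> v \<in> y n})"
  unfolding ring_completion_def adic_completion_def Let_def by (simp add: ring_module_simps)

lemma completion_smult: "r \<odot>\<^bsub>completion\<^esub> x = (\<lambda>n. {r \<otimes> u \<oplus> v | u v. u \<in> x n \<and> v \<in> Ipow n})"
  unfolding ring_completion_def adic_completion_def Let_def using ideal_smult_ring_module
  by (simp add: ring_module_simps)

lemma completion_elem_in_carrier: "adic_seq x \<Longrightarrow> completion_elem x \<in> carrier completion"
  unfolding completion_carrier completion_elem_def adic_seq_def using mcoset_Ipow_Suc_subset_iff by auto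

lemma completion_elem_surj:
  assumes c: "c \<in> carrier completion"
  obtains x where "adic_seq x" "c = completion_elem x"
proof -
  have "\<forall>n. \<exists>a. a \<in> carrier R \<and> c n = mcoset (ring_module R) (Ipow n) a"
    using c unfolding completion_carrier by blast
  then obtain x where x: "\<And>n. x n \<in> carrier R" "\<And>n. c n = mcoset (ring_module R) (Ipow n) (x n)" by metis
  have "c (Suc n) \<subseteq> c n" for n using c unfolding completion_carrier by blast
  then have "x (Suc n) \<ominus> x n \<in> Ipow n" for n using x mcoset_Ipow_Suc_subset_iff by metis
  then have "adic_seq x" using x(1) by (intro adic_seqI)
  moreover have "c = completion_elem x" unfolding completion_elem_def using x(2) by auto
  ultimately show ?thesis using that by blast
qed

lemma completion_elem_eq_iff:
  "(\<And>k. x k \<in> carrier R) \<Longrightarrow> (\<And>k. y k \<in> carrier R) \<Longrightarrow>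
    completion_elem x = completion_elem y \<longleftrightarrow> (\<forall>k. x k \<ominus> y k \<in> Ipow k)"
  unfolding completion_elem_def fun_eq_iff using mcoset_Ipow_eq_iff by blast

lemma completion_elem_add:
  "(\<And>k. x k \<in> carrier R) \<Longrightarrow> (\<And>k. y k \<in> carrier R) \<Longrightarrow>
    completion_elem x \<oplus>\<^bsub>completion\<^esub> completion_elem y = completion_elem (\<lambda>k. x k \<oplus> y k)"
  unfolding completion_add completion_elem_def mcoset_ring_module using coset_image_add[OF Ipow_ideal] by auto

lemma completion_elem_smult:
  "r \<in> carrier R \<Longrightarrow> (\<And>k. x k \<in> carrier R) \<Longrightarrow>
    r \<odot>\<^bsub>completion\<^esub> completion_elem x = completion_elem (\<lambda>k. r \<otimes> x k)"
  unfolding completion_smult completion_elem_def mcoset_ring_module using coset_image_mult[OF Ipow_ideal] by auto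

lemma completion_elem_shift: "adic_seq x \<Longrightarrow> completion_elem (\<lambda>k. x (n + k)) = completion_elem x"
proof -
  assume x: "adic_seq x"
  have "x (n + k) \<ominus> x k \<in> Ipow k" for k using adic_seq_tail[OF x, of k n] by (simp only: add.commute)
  then show ?thesis by (subst completion_elem_eq_iff) (use adic_seq_carrier[OF x] in auto)
qed

text \<open>Each increment \<open>x\<^sub>n\<^sub>+\<^sub>j\<^sub>+\<^sub>1 - x\<^sub>n\<^sub>+\<^sub>j\<close> lies in \<open>I\<^sup>n I\<^sup>j\<close>, hence is \<open>\<Sum>\<^sub>g g y\<^sub>j\<^sub>g\<close>
  with \<open>y\<^sub>j\<^sub>g \<in> I\<^sup>j\<close>; summing over \<open>j\<close> gives the adic Cauchy sequences \<open>W g\<close>.\<close>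
lemma adic_seq_tail_lin_comb:
  assumes x: "adic_seq x" and G: "finite G" "G \<subseteq> carrier R" "Ipow n = Idl G"
  obtains W where "\<And>g. g \<in> G \<Longrightarrow> adic_seq (W g)" "\<And>k. x (n + k) = x n \<oplus> lin_comb G (\<lambda>g. W g k)"
proof -
  have "\<exists>y. (\<forall>g\<in>G. y g \<in> Ipow j) \<and> x (n + Suc j) \<ominus> x (n + j) = lin_comb G y" for j
  proof -
    have "x (Suc (n + j)) \<ominus> x (n + j) \<in> ideal_prod R (Idl G) (Ipow j)"
      using adic_seq_diff[OF x, of "n + j"] ideal_power_add[OF ideal_I, of n j] G(3) by simp
    then show ?thesis using ideal_prod_lin_comb[OF G(1,2) Ipow_ideal] by simp
  qed
  then obtain Y where Y: "\<And>j g. g \<in> G \<Longrightarrow> Y j g \<in> Ipow j"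
    "\<And>j. x (n + Suc j) \<ominus> x (n + j) = lin_comb G (Y j)" by metis
  define W where "W = (\<lambda>g. rec_nat \<zero> (\<lambda>k w. w \<oplus> Y k g))"
  have W0: "W g 0 = \<zero>" and W_Suc: "W g (Suc k) = W g k \<oplus> Y k g" for g k unfolding W_def by simp_all
  have YR: "Y j g \<in> carrier R" if "g \<in> G" for j g using Y(1)[OF that] Ipow_carrier by blast
  have WR: "W g k \<in> carrier R" if g: "g \<in> G" for g k by (induction k) (simp_all add: W0 W_Suc YR[OF g])
  have "adic_seq (W g)" if g: "g \<in> G" for g
    by (rule adic_seqI[OF WR[OF g]]) (simp add: W_Suc a_add_minus_cancel_left[OF WR[OF g] YR[OF g]] Y(1)[OF g])
  moreover have xR: "x k \<in> carrier R" for k by (rule adic_seq_carrier[OF x])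
  have "lin_comb G (\<lambda>g. W g k) = x (n + k) \<ominus> x n" for k
  proof (induction k)
    case 0 then show ?case using lin_comb_zero[OF G(1,2)] xR by (simp add: W0 a_minus_def r_neg)
  next
    case (Suc k)
    have "lin_comb G (\<lambda>g. W g (Suc k)) = lin_comb G (\<lambda>g. W g k) \<oplus> lin_comb G (Y k)"
      unfolding W_Suc by (rule lin_comb_add[symmetric, OF G(1,2)]) (use WR YR in auto)
    also have "\<dots> = (x (n + k) \<ominus> x n) \<oplus> (x (n + Suc k) \<ominus> x (n + k))" using Suc Y(2)[of k] by simp
    also have "\<dots> = (x (n + Suc k) \<ominus> x (n + k)) \<oplus> (x (n + k) \<ominus> x n)" using xR by (simp add: a_comm)
    also have "\<dots> = x (n + Suc k) \<ominus> x n" by (rule a_minus_chain[OF xR xR xR])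
    finally show ?case .
  qed
  then have "x (n + k) = x n \<oplus> lin_comb G (\<lambda>g. W g k)" for k using a_add_minus_cancel[OF xR xR] by simp
  ultimately show ?thesis using that by blast
qed

lemma adic_seq_diagonal:
  assumes S: "\<And>m. adic_seq (S m)" and D: "\<And>m. adic_seq (\<lambda>k. S (Suc m) k \<ominus> S m k)"
    and Dm: "\<And>m. S (Suc m) m \<ominus> S m m \<in> Ipow m"
  shows "adic_seq (\<lambda>k. S k k)"
proof (rule adic_seqI)
  show "S k k \<in> carrier R" for k using adic_seq_carrier[OF S] .
  fix k
  have SR: "S m j \<in> carrier R" for m j using adic_seq_carrier[OF S] .
  have "S (Suc k) (Suc k) \<ominus> S k (Suc k)
      = (S (Suc k) k \<ominus> S k k) \<oplus> ((S (Suc k) (Suc k) \<ominus> S k (Suc k)) \<ominus> (S (Suc k) k \<ominus> S k k))"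
    using SR by (simp add: a_add_minus_cancel)
  then have "S (Suc k) (Suc k) \<ominus> S k (Suc k) \<in> Ipow k"
    using Ipow_add[OF Dm[of k] adic_seq_diff[OF D[of k], of k]] by simp
  moreover have "S (Suc k) (Suc k) \<ominus> S k k = (S (Suc k) (Suc k) \<ominus> S k (Suc k)) \<oplus> (S k (Suc k) \<ominus> S k k)"
    using SR by (simp add: a_minus_chain)
  ultimately show "S (Suc k) (Suc k) \<ominus> S k k \<in> Ipow k" using Ipow_add adic_seq_diff[OF S[of k], of k] by simp
qed

end

section \<open>Adically complete submodules\<close>

context Rmodule begin

lemma ideal_smult_submodule_sum:
  assumes J: "J \<subseteq> carrier R" and P: "submodule P R M" and Q: "submodule Q R M"
  shows "ideal_smult R M J (submodule_sum P Q) = submodule_sum (ideal_smult R M J P) (ideal_smult R M J Q)"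
proof
  note Pc = submoduleD(1)[OF P] and Qc = submoduleD(1)[OF Q]
  show "ideal_smult R M J (submodule_sum P Q) \<subseteq> submodule_sum (ideal_smult R M J P) (ideal_smult R M J Q)"
  proof (rule ideal_smult_least[OF submodule_sum_submodule[OF ideal_smult_submodule[OF J Pc] ideal_smult_submodule[OF J Qc]]])
    fix r x assume r: "r \<in> J" and "x \<in> submodule_sum P Q"
    then obtain p q where pq: "p \<in> P" "q \<in> Q" "x = p \<oplus>\<^bsub>M\<^esub> q" unfolding submodule_sum_def by blast
    have "r \<odot>\<^bsub>M\<^esub> x = r \<odot>\<^bsub>M\<^esub> p \<oplus>\<^bsub>M\<^esub> r \<odot>\<^bsub>M\<^esub> q"
      unfolding pq(3) using pq r J Pc Qc by (simp add: smult_r_distr subsetD)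
    then show "r \<odot>\<^bsub>M\<^esub> x \<in> submodule_sum (ideal_smult R M J P) (ideal_smult R M J Q)"
      unfolding submodule_sum_def using ideal_smultI[OF r pq(1)] ideal_smultI[OF r pq(2)] by blast
  qed
  have S: "submodule_sum P Q \<subseteq> carrier M" using submoduleD(1)[OF submodule_sum_submodule[OF P Q]] .
  show "submodule_sum (ideal_smult R M J P) (ideal_smult R M J Q) \<subseteq> ideal_smult R M J (submodule_sum P Q)"
    using ideal_smult_mono[OF J S subset_refl submodule_sum_upper1[OF Q Pc]]
      ideal_smult_mono[OF J S subset_refl submodule_sum_upper2[OF P Qc]]
    by (intro submodule_sum_least ideal_smult_submodule[OF J S])
qed

end

locale adic_Rmodule = Rmodule + adic_ring R I for I
begin

abbreviation pow_smult where
  "pow_smult P n \<equiv> ideal_smult R M (Ipow n) P"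

lemma pow_smult_submodule: "P \<subseteq> carrier M \<Longrightarrow> submodule (pow_smult P n) R M"
  by (rule ideal_smult_submodule[OF Ipow_carrier])

lemma pow_smult_subset: "submodule P R M \<Longrightarrow> pow_smult P n \<subseteq> P"
  by (rule ideal_smult_subset[OF Ipow_carrier])

lemma pow_smult_Suc_subset: "P \<subseteq> carrier M \<Longrightarrow> pow_smult P (Suc n) \<subseteq> pow_smult P n"
  by (rule ideal_smult_mono[OF Ipow_carrier _ ideal_power_Suc_subset[OF ideal_I]]) auto

definition has_adic_limits where
  "has_adic_limits P \<longleftrightarrow> (\<forall>s. (\<forall>n. s n \<in> P) \<and> (\<forall>n. s (Suc n) \<ominus>\<^bsub>M\<^esub> s n \<in> pow_smult P n) \<longrightarrow>
      (\<exists>x\<in>P. \<forall>n. x \<ominus>\<^bsub>M\<^esub> s n \<in> pow_smult P n))"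

lemma mcoset_pow_smult_Suc_subset_iff:
  assumes "submodule P R M" "x \<in> carrier M" "y \<in> carrier M"
  shows "mcoset M (pow_smult P (Suc n)) y \<subseteq> mcoset M (pow_smult P n) x \<longleftrightarrow> y \<ominus>\<^bsub>M\<^esub> x \<in> pow_smult P n"
  using submoduleD(1)[OF assms(1)] assms(2,3)
  by (intro mcoset_subset_iff pow_smult_submodule pow_smult_Suc_subset)

lemma adic_canon_in_invlim:
  assumes P: "submodule P R M" and x: "x \<in> P"
  shows "adic_canon R M I P x \<in> adic_invlim R M I P"
proof -
  have xM: "x \<in> carrier M" using x submoduleD(1)[OF P] by auto
  have "x \<ominus>\<^bsub>M\<^esub> x \<in> pow_smult P n" for n
    using submoduleD(2)[OF pow_smult_submodule[OF submoduleD(1)[OF P]]] xM by (simp add: M.r_neg a_minus_def)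
  then show ?thesis unfolding adic_invlim_def adic_canon_def
    using x mcoset_pow_smult_Suc_subset_iff[OF P xM xM] by auto
qed

lemma adic_canon_eq_iff:
  assumes P: "submodule P R M" and x: "x \<in> P" and s: "\<forall>n. s n \<in> P"
  shows "adic_canon R M I P x = (\<lambda>n. mcoset M (pow_smult P n) (s n)) \<longleftrightarrow> (\<forall>n. x \<ominus>\<^bsub>M\<^esub> s n \<in> pow_smult P n)"
proof -
  have "x \<in> carrier M" "s n \<in> carrier M" for n using x s submoduleD(1)[OF P] by auto
  then have "mcoset M (pow_smult P n) x = mcoset M (pow_smult P n) (s n) \<longleftrightarrow> x \<ominus>\<^bsub>M\<^esub> s n \<in> pow_smult P n" for n
    using mcoset_eq_iff[OF pow_smult_submodule[OF submoduleD(1)[OF P]]] by blast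
  then show ?thesis unfolding adic_canon_def fun_eq_iff by blast
qed

lemma adic_invlimI:
  assumes P: "submodule P R M" and s: "\<forall>n. s n \<in> P" "\<forall>n. s (Suc n) \<ominus>\<^bsub>M\<^esub> s n \<in> pow_smult P n"
  shows "(\<lambda>n. mcoset M (pow_smult P n) (s n)) \<in> adic_invlim R M I P"
proof -
  have sM: "s n \<in> carrier M" for n using s(1) submoduleD(1)[OF P] by auto
  have "mcoset M (pow_smult P (Suc n)) (s (Suc n)) \<subseteq> mcoset M (pow_smult P n) (s n)" for n
    using s(2) mcoset_pow_smult_Suc_subset_iff[OF P sM sM] by simp
  then show ?thesis unfolding adic_invlim_def using s(1) by blast
qed

lemma adic_invlimE:
  assumes P: "submodule P R M" and c: "c \<in> adic_invlim R M I P"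
  obtains s where "\<forall>n. s n \<in> P" "\<forall>n. s (Suc n) \<ominus>\<^bsub>M\<^esub> s n \<in> pow_smult P n"
    "c = (\<lambda>n. mcoset M (pow_smult P n) (s n))"
proof -
  have "\<forall>n. \<exists>x. x \<in> P \<and> c n = mcoset M (pow_smult P n) x" using c unfolding adic_invlim_def by blast
  then obtain s where s: "\<And>n. s n \<in> P" "\<And>n. c n = mcoset M (pow_smult P n) (s n)" by metis
  have sM: "s n \<in> carrier M" for n using s(1) submoduleD(1)[OF P] by auto
  have "c (Suc n) \<subseteq> c n" for n using c unfolding adic_invlim_def by blast
  then have "s (Suc n) \<ominus>\<^bsub>M\<^esub> s n \<in> pow_smult P n" for n
    using s(2) mcoset_pow_smult_Suc_subset_iff[OF P sM sM] by simp
  then show ?thesis using that s by blast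
qed

lemma has_adic_limits_iff_surj:
  assumes P: "submodule P R M"
  shows "has_adic_limits P \<longleftrightarrow> adic_invlim R M I P \<subseteq> adic_canon R M I P ` P"
proof
  assume lim: "has_adic_limits P"
  show "adic_invlim R M I P \<subseteq> adic_canon R M I P ` P"
  proof
    fix c assume "c \<in> adic_invlim R M I P"
    then obtain s where s: "\<forall>n. s n \<in> P" "\<forall>n. s (Suc n) \<ominus>\<^bsub>M\<^esub> s n \<in> pow_smult P n"
      and c: "c = (\<lambda>n. mcoset M (pow_smult P n) (s n))" by (rule adic_invlimE[OF P])
    then obtain x where x: "x \<in> P" "\<forall>n. x \<ominus>\<^bsub>M\<^esub> s n \<in> pow_smult P n"
      using lim unfolding has_adic_limits_def by blast
    then have "adic_canon R M I P x = c" using adic_canon_eq_iff[OF P x(1), of s] s(1) c by blast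
    then show "c \<in> adic_canon R M I P ` P" using x(1) by blast
  qed
next
  assume surj: "adic_invlim R M I P \<subseteq> adic_canon R M I P ` P"
  show "has_adic_limits P" unfolding has_adic_limits_def
  proof (intro allI impI)
    fix s assume s: "(\<forall>n. s n \<in> P) \<and> (\<forall>n. s (Suc n) \<ominus>\<^bsub>M\<^esub> s n \<in> pow_smult P n)"
    then have "(\<lambda>n. mcoset M (pow_smult P n) (s n)) \<in> adic_invlim R M I P"
      by (intro adic_invlimI[OF P]) (use s in auto)
    then have "(\<lambda>n. mcoset M (pow_smult P n) (s n)) \<in> adic_canon R M I P ` P" by (rule subsetD[OF surj])
    then obtain x where x: "(\<lambda>n. mcoset M (pow_smult P n) (s n)) = adic_canon R M I P x" "x \<in> P"
      by (rule imageE)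
    then have "\<forall>n. x \<ominus>\<^bsub>M\<^esub> s n \<in> pow_smult P n" using adic_canon_eq_iff[OF P x(2), of s] s by simp
    then show "\<exists>x\<in>P. \<forall>n. x \<ominus>\<^bsub>M\<^esub> s n \<in> pow_smult P n" using x(2) by blast
  qed
qed

lemma has_adic_limits_zero: "has_adic_limits {\<zero>\<^bsub>M\<^esub>}"
  unfolding has_adic_limits_def
  using submoduleD(2)[OF pow_smult_submodule[of "{\<zero>\<^bsub>M\<^esub>}"]] by (auto simp: a_minus_def M.r_neg)

lemma adic_cauchy_submodule_sum_split:
  assumes P: "submodule P R M" and Q: "submodule Q R M"
    and s: "\<forall>n. s n \<in> submodule_sum P Q" "\<forall>n. s (Suc n) \<ominus>\<^bsub>M\<^esub> s n \<in> pow_smult (submodule_sum P Q) n"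
  obtains sp sq where "\<forall>n. sp n \<in> P" "\<forall>n. sp (Suc n) \<ominus>\<^bsub>M\<^esub> sp n \<in> pow_smult P n"
    "\<forall>n. sq n \<in> Q" "\<forall>n. sq (Suc n) \<ominus>\<^bsub>M\<^esub> sq n \<in> pow_smult Q n" "\<forall>n. s n = sp n \<oplus>\<^bsub>M\<^esub> sq n"
proof -
  note Pc = submoduleD[OF P] and Qc = submoduleD[OF Q]
  have "s (Suc n) \<ominus>\<^bsub>M\<^esub> s n \<in> submodule_sum (pow_smult P n) (pow_smult Q n)" for n
    using s(2) ideal_smult_submodule_sum[OF Ipow_carrier P Q] by blast
  then have "\<exists>u v. u \<in> pow_smult P n \<and> v \<in> pow_smult Q n \<and> s (Suc n) \<ominus>\<^bsub>M\<^esub> s n = u \<oplus>\<^bsub>M\<^esub> v" for n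
    unfolding submodule_sum_def by blast
  then obtain u v where uv: "\<And>n. u n \<in> pow_smult P n" "\<And>n. v n \<in> pow_smult Q n"
    "\<And>n. s (Suc n) \<ominus>\<^bsub>M\<^esub> s n = u n \<oplus>\<^bsub>M\<^esub> v n"
    by metis
  obtain p0 q0 where pq0: "p0 \<in> P" "q0 \<in> Q" "s 0 = p0 \<oplus>\<^bsub>M\<^esub> q0" using s(1) unfolding submodule_sum_def by blast
  define sp where "sp = rec_nat p0 (\<lambda>n x. x \<oplus>\<^bsub>M\<^esub> u n)"
  define sq where "sq = rec_nat q0 (\<lambda>n x. x \<oplus>\<^bsub>M\<^esub> v n)"
  have sp_Suc: "sp (Suc n) = sp n \<oplus>\<^bsub>M\<^esub> u n" and sq_Suc: "sq (Suc n) = sq n \<oplus>\<^bsub>M\<^esub> v n" for n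
    unfolding sp_def sq_def by simp_all
  have uP: "u n \<in> P" and vQ: "v n \<in> Q" for n using uv pow_smult_subset[OF P] pow_smult_subset[OF Q] by blast+
  have spP: "sp n \<in> P" and sqQ: "sq n \<in> Q" for n
    by (induction n) (use pq0 uP vQ Pc(3) Qc(3) sp_Suc sq_Suc in \<open>simp_all add: sp_def sq_def\<close>)
  have carr: "sp n \<in> carrier M" "sq n \<in> carrier M" "u n \<in> carrier M" "v n \<in> carrier M" for n
    using spP sqQ uP vQ Pc(1) Qc(1) by auto
  have sM: "s n \<in> carrier M" for n using s(1) submoduleD(1)[OF submodule_sum_submodule[OF P Q]] by auto
  have "s n = sp n \<oplus>\<^bsub>M\<^esub> sq n" for n
  proof (induction n)
    case 0 then show ?case using pq0 by (simp add: sp_def sq_def)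
  next
    case (Suc n)
    have "s (Suc n) = (u n \<oplus>\<^bsub>M\<^esub> v n) \<oplus>\<^bsub>M\<^esub> s n"
      using M.a_minus_add_cancel[OF sM sM, of "Suc n" n] uv(3) by simp
    then show ?case unfolding Suc sp_Suc sq_Suc using carr by (simp add: M.a_ac)
  qed
  moreover have "sp (Suc n) \<ominus>\<^bsub>M\<^esub> sp n \<in> pow_smult P n" "sq (Suc n) \<ominus>\<^bsub>M\<^esub> sq n \<in> pow_smult Q n" for n
    unfolding sp_Suc sq_Suc using M.a_add_minus_cancel_left carr uv(1,2) by simp_all
  ultimately show ?thesis using that spP sqQ by blast
qed

lemma has_adic_limits_submodule_sum:
  assumes P: "submodule P R M" and Q: "submodule Q R M"
    and lim_P: "has_adic_limits P" and lim_Q: "has_adic_limits Q"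
  shows "has_adic_limits (submodule_sum P Q)"
  unfolding has_adic_limits_def
proof (intro allI impI)
  let ?S = "submodule_sum P Q"
  fix s assume "(\<forall>n. s n \<in> ?S) \<and> (\<forall>n. s (Suc n) \<ominus>\<^bsub>M\<^esub> s n \<in> pow_smult ?S n)"
  then obtain sp sq where sp: "\<forall>n. sp n \<in> P" "\<forall>n. sp (Suc n) \<ominus>\<^bsub>M\<^esub> sp n \<in> pow_smult P n"
    and sq: "\<forall>n. sq n \<in> Q" "\<forall>n. sq (Suc n) \<ominus>\<^bsub>M\<^esub> sq n \<in> pow_smult Q n"
    and s_split: "\<forall>n. s n = sp n \<oplus>\<^bsub>M\<^esub> sq n"
    using adic_cauchy_submodule_sum_split[OF P Q] by blast
  obtain x where x: "x \<in> P" "\<And>n. x \<ominus>\<^bsub>M\<^esub> sp n \<in> pow_smult P n"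
    using lim_P sp unfolding has_adic_limits_def by blast
  obtain y where y: "y \<in> Q" "\<And>n. y \<ominus>\<^bsub>M\<^esub> sq n \<in> pow_smult Q n"
    using lim_Q sq unfolding has_adic_limits_def by blast
  have "(x \<oplus>\<^bsub>M\<^esub> y) \<ominus>\<^bsub>M\<^esub> s n = (x \<ominus>\<^bsub>M\<^esub> sp n) \<oplus>\<^bsub>M\<^esub> (y \<ominus>\<^bsub>M\<^esub> sq n)" for n
    using s_split x y sp(1) sq(1) submoduleD(1)[OF P] submoduleD(1)[OF Q]
    by (simp add: M.a_add_minus_add subsetD)
  then have "(x \<oplus>\<^bsub>M\<^esub> y) \<ominus>\<^bsub>M\<^esub> s n \<in> submodule_sum (pow_smult P n) (pow_smult Q n)" for n
    unfolding submodule_sum_def using x(2) y(2) by blast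
  then have "(x \<oplus>\<^bsub>M\<^esub> y) \<ominus>\<^bsub>M\<^esub> s n \<in> pow_smult ?S n" for n
    using ideal_smult_submodule_sum[OF Ipow_carrier P Q] by blast
  moreover have "x \<oplus>\<^bsub>M\<^esub> y \<in> ?S" unfolding submodule_sum_def using x y by blast
  ultimately show "\<exists>x\<in>?S. \<forall>n. x \<ominus>\<^bsub>M\<^esub> s n \<in> pow_smult ?S n" by blast
qed

end

locale krull_Rmodule = fg_noetherian_Rmodule + adic_Rmodule +
  assumes I_jacobson: "I \<subseteq> jacobson_radical R"
begin

lemma adically_complete_iff_has_adic_limits:
  assumes P: "submodule P R M"
  shows "adically_complete R M I P \<longleftrightarrow> has_adic_limits P"
proof -
  have "inj_on (adic_canon R M I P) P"
  proof
    fix x y assume xy: "x \<in> P" "y \<in> P" "adic_canon R M I P x = adic_canon R M I P y"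
    then have "x \<ominus>\<^bsub>M\<^esub> y \<in> (\<Inter>n. pow_smult P n)"
      using adic_canon_eq_iff[OF P xy(1), of "\<lambda>n. y"] xy unfolding adic_canon_def by simp
    then have "x \<ominus>\<^bsub>M\<^esub> y = \<zero>\<^bsub>M\<^esub>" using krull_intersection[OF ideal_I I_jacobson P] by simp
    then show "x = y" using M.a_minus_add_cancel[of x y] xy(1,2) submoduleD(1)[OF P] by (auto simp: subsetD)
  qed
  then show ?thesis unfolding adically_complete_def bij_betw_def has_adic_limits_iff_surj[OF P]
    using adic_canon_in_invlim[OF P] by auto
qed

lemma max_complete_submodule_greatest:
  shows "submodule (max_complete_submodule R M I) R M"
    and "\<And>N. submodule N R M \<Longrightarrow> has_adic_limits N \<Longrightarrow> N \<subseteq> max_complete_submodule R M I"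
proof -
  define F where "F = {N. submodule N R M \<and> has_adic_limits N}"
  have "{\<zero>\<^bsub>M\<^esub>} \<in> F" unfolding F_def using has_adic_limits_zero zero_submodule by simp
  then have "\<exists>C\<in>F. \<forall>X\<in>F. C \<subseteq> X \<longrightarrow> X = C" by (intro submodule_family_maximal) (auto simp: F_def)
  then obtain C where C: "submodule C R M" "has_adic_limits C" and C_max: "\<And>X. X \<in> F \<Longrightarrow> C \<subseteq> X \<Longrightarrow> X = C"
    unfolding F_def by auto
  have greatest: "N \<subseteq> C" if N: "submodule N R M" "has_adic_limits N" for N
  proof -
    have "submodule_sum C N \<in> F"
      unfolding F_def using submodule_sum_submodule[OF C(1) N(1)] has_adic_limits_submodule_sum[OF C(1) N(1) C(2) N(2)] by simp
    then have "submodule_sum C N = C" using C_max submodule_sum_upper1[OF N(1) submoduleD(1)[OF C(1)]] by blast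
    then show "N \<subseteq> C" using submodule_sum_upper2[OF C(1) submoduleD(1)[OF N(1)]] by simp
  qed
  have "max_complete_submodule R M I = C"
    unfolding max_complete_submodule_def
  proof (rule the_equality)
    show "submodule C R M \<and> adically_complete R M I C \<and>
        (\<forall>N'. submodule N' R M \<and> adically_complete R M I N' \<and> C \<subseteq> N' \<longrightarrow> N' = C)"
      using C greatest adically_complete_iff_has_adic_limits by blast
    fix N assume "submodule N R M \<and> adically_complete R M I N \<and>
        (\<forall>N'. submodule N' R M \<and> adically_complete R M I N' \<and> N \<subseteq> N' \<longrightarrow> N' = N)"
    then show "N = C" using greatest C adically_complete_iff_has_adic_limits by blast
  qed
  then show "submodule (max_complete_submodule R M I) R M"
    "\<And>N. submodule N R M \<Longrightarrow> has_adic_limits N \<Longrightarrow> N \<subseteq> max_complete_submodule R M I"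
    using C greatest by auto
qed

end

section \<open>Homomorphisms out of the completion\<close>

lemma module_Hom_closed: "f \<in> module_Hom R A B \<Longrightarrow> x \<in> carrier A \<Longrightarrow> f x \<in> carrier B"
  unfolding module_Hom_def by auto

lemma module_Hom_add:
  "f \<in> module_Hom R A B \<Longrightarrow> x \<in> carrier A \<Longrightarrow> y \<in> carrier A \<Longrightarrow> f (x \<oplus>\<^bsub>A\<^esub> y) = f x \<oplus>\<^bsub>B\<^esub> f y"
  unfolding module_Hom_def by auto

lemma module_Hom_smult:
  "f \<in> module_Hom R A B \<Longrightarrow> r \<in> carrier R \<Longrightarrow> x \<in> carrier A \<Longrightarrow> f (r \<odot>\<^bsub>A\<^esub> x) = r \<odot>\<^bsub>B\<^esub> f x"
  unfolding module_Hom_def by auto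

lemma module_Hom_restrict_codomain:
  assumes "N \<subseteq> carrier M" and "\<And>f. f \<in> module_Hom R A M \<Longrightarrow> f ` carrier A \<subseteq> N"
  shows "module_Hom R A (M\<lparr>carrier := N\<rparr>) = module_Hom R A M"
  using assms unfolding module_Hom_def by (auto simp: PiE_def Pi_def)

context adic_Rmodule begin

lemma hom_completion_elem_add:
  assumes f: "f \<in> module_Hom R completion M" and x: "adic_seq x" and y: "adic_seq y"
  shows "f (completion_elem (\<lambda>k. x k \<oplus> y k)) = f (completion_elem x) \<oplus>\<^bsub>M\<^esub> f (completion_elem y)"
  using module_Hom_add[OF f completion_elem_in_carrier[OF x] completion_elem_in_carrier[OF y]]
    completion_elem_add[OF adic_seq_carrier[OF x] adic_seq_carrier[OF y]] by simp

lemma hom_completion_elem_mult: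
  assumes f: "f \<in> module_Hom R completion M" and r: "r \<in> carrier R" and x: "adic_seq x"
  shows "f (completion_elem (\<lambda>k. r \<otimes> x k)) = r \<odot>\<^bsub>M\<^esub> f (completion_elem x)"
  using module_Hom_smult[OF f r completion_elem_in_carrier[OF x]]
    completion_elem_smult[OF r adic_seq_carrier[OF x]] by simp

lemma hom_completion_elem_zero:
  assumes f: "f \<in> module_Hom R completion M"
  shows "f (completion_elem (\<lambda>k. \<zero>)) = \<zero>\<^bsub>M\<^esub>"
  using hom_completion_elem_mult[OF f R.zero_closed adic_seq_const[OF R.one_closed]]
    module_Hom_closed[OF f completion_elem_in_carrier[OF adic_seq_const[OF R.one_closed]]] by simp

lemma hom_image_completion_elemE:
  assumes "u \<in> f ` carrier completion"
  obtains x where "adic_seq x" "u = f (completion_elem x)"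
proof -
  obtain c where "c \<in> carrier completion" "u = f c" using assms by blast
  then show ?thesis using that completion_elem_surj by metis
qed

lemma hom_completion_elem_in_image: "adic_seq x \<Longrightarrow> f (completion_elem x) \<in> f ` carrier completion"
  by (rule imageI[OF completion_elem_in_carrier])

lemma hom_image_submodule:
  assumes f: "f \<in> module_Hom R completion M"
  shows "submodule (f ` carrier completion) R M"
proof (rule submoduleI')
  show "f ` carrier completion \<subseteq> carrier M" using module_Hom_closed[OF f] by auto
  show "\<zero>\<^bsub>M\<^esub> \<in> f ` carrier completion"
    using hom_completion_elem_in_image[where f=f, OF adic_seq_const[OF R.zero_closed]] hom_completion_elem_zero[OF f] by simp
  fix u v assume "u \<in> f ` carrier completion"
  then obtain x where x: "adic_seq x" "u = f (completion_elem x)" by (rule hom_image_completion_elemE)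
  { assume "v \<in> f ` carrier completion"
    then obtain y where y: "adic_seq y" "v = f (completion_elem y)" by (rule hom_image_completion_elemE)
    show "u \<oplus>\<^bsub>M\<^esub> v \<in> f ` carrier completion"
      using hom_completion_elem_add[OF f x(1) y(1)] x y hom_completion_elem_in_image[where f=f, OF adic_seq_add[OF x(1) y(1)]]
      by simp }
  fix r assume r: "r \<in> carrier R"
  show "r \<odot>\<^bsub>M\<^esub> u \<in> f ` carrier completion"
    using hom_completion_elem_mult[OF f r x(1)] x hom_completion_elem_in_image[where f=f, OF adic_seq_mult[OF r x(1)]] by simp
qed

lemma hom_lin_comb_in_pow_smult:
  assumes f: "f \<in> module_Hom R completion M" and G: "finite G" "G \<subseteq> Ipow n"
    and W: "\<And>g. g \<in> G \<Longrightarrow> adic_seq (W g)"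
  shows "adic_seq (\<lambda>k. lin_comb G (\<lambda>g. W g k))
    \<and> f (completion_elem (\<lambda>k. lin_comb G (\<lambda>g. W g k))) \<in> pow_smult (f ` carrier completion) n"
  using G W
proof (induction G rule: finite_induct)
  case empty
  have "\<zero>\<^bsub>M\<^esub> \<in> pow_smult (f ` carrier completion) n"
    using submoduleD(2)[OF pow_smult_submodule] submoduleD(1)[OF hom_image_submodule[OF f]] by blast
  then show ?case using hom_completion_elem_zero[OF f] adic_seq_const[OF R.zero_closed]
    by (simp add: lin_comb_empty)
next
  case (insert g G)
  have gR: "g \<in> carrier R" and GR: "insert g G \<subseteq> carrier R" using insert.prems(1) Ipow_carrier by auto
  note IH = insert.IH[OF _ insert.prems(2)] insert.prems(1)
  have Wg: "adic_seq (W g)" using insert.prems(2) by simp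
  have eq: "lin_comb (insert g G) (\<lambda>g. W g k) = g \<otimes> W g k \<oplus> lin_comb G (\<lambda>g. W g k)" for k
    by (rule lin_comb_insert[OF insert.hyps(1) GR insert.hyps(2)]) (use insert.prems(2) adic_seq_carrier in blast)
  have g_seq: "adic_seq (\<lambda>k. g \<otimes> W g k)" by (rule adic_seq_mult[OF gR Wg])
  have "g \<odot>\<^bsub>M\<^esub> f (completion_elem (W g)) \<in> pow_smult (f ` carrier completion) n"
    using ideal_smultI[of g "Ipow n"] insert.prems(1) completion_elem_in_carrier[OF Wg] by blast
  then show ?case
    using IH adic_seq_add[OF g_seq] hom_completion_elem_add[OF f g_seq] hom_completion_elem_mult[OF f gR Wg]
      submoduleD(3)[OF pow_smult_submodule[OF submoduleD(1)[OF hom_image_submodule[OF f]]]]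
    unfolding eq by auto
qed

lemma hom_completion_elem_in_pow_smult:
  assumes noeth: "noetherian_ring R" and f: "f \<in> module_Hom R completion M"
    and x: "adic_seq x" "x n \<in> Ipow n"
  shows "f (completion_elem x) \<in> pow_smult (f ` carrier completion) n"
proof -
  let ?N = "f ` carrier completion"
  obtain G where G: "G \<subseteq> carrier R" "finite G" "Ipow n = Idl G"
    using noetherian_ring.finetely_gen[OF noeth Ipow_ideal] by blast
  obtain W where W: "\<And>g. g \<in> G \<Longrightarrow> adic_seq (W g)" "\<And>k. x (n + k) = x n \<oplus> lin_comb G (\<lambda>g. W g k)"
    using adic_seq_tail_lin_comb[OF x(1) G(2,1,3)] by blast
  have GI: "G \<subseteq> Ipow n" using genideal_self[OF G(1)] G(3) by simp
  have lc: "adic_seq (\<lambda>k. lin_comb G (\<lambda>g. W g k))"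
    "f (completion_elem (\<lambda>k. lin_comb G (\<lambda>g. W g k))) \<in> pow_smult ?N n"
    using hom_lin_comb_in_pow_smult[OF f G(2) GI W(1)] by auto
  have xnR: "x n \<in> carrier R" using adic_seq_carrier[OF x(1)] .
  have "completion_elem x = completion_elem (\<lambda>k. x n \<otimes> \<one> \<oplus> lin_comb G (\<lambda>g. W g k))"
    using completion_elem_shift[OF x(1), of n] W(2) xnR by simp
  then have "f (completion_elem x) = x n \<odot>\<^bsub>M\<^esub> f (completion_elem (\<lambda>k. \<one>))
      \<oplus>\<^bsub>M\<^esub> f (completion_elem (\<lambda>k. lin_comb G (\<lambda>g. W g k)))"
    using hom_completion_elem_add[OF f adic_seq_mult[OF xnR adic_seq_const[OF R.one_closed]] lc(1)]
      hom_completion_elem_mult[OF f xnR adic_seq_const[OF R.one_closed]] by simp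
  moreover have "x n \<odot>\<^bsub>M\<^esub> f (completion_elem (\<lambda>k. \<one>)) \<in> pow_smult ?N n"
    using ideal_smultI[OF x(2)] completion_elem_in_carrier[OF adic_seq_const[OF R.one_closed]] by blast
  ultimately show ?thesis
    using lc(2) submoduleD(3)[OF pow_smult_submodule[OF submoduleD(1)[OF hom_image_submodule[OF f]]]] by simp
qed

lemma hom_image_Ipow_coord_submodule:
  assumes f: "f \<in> module_Hom R completion M"
  shows "submodule {f (completion_elem x) | x. adic_seq x \<and> x n \<in> Ipow n} R M"
proof (rule submoduleI')
  show "{f (completion_elem x) | x. adic_seq x \<and> x n \<in> Ipow n} \<subseteq> carrier M"
    using module_Hom_closed[OF f completion_elem_in_carrier] by auto
  show "\<zero>\<^bsub>M\<^esub> \<in> {f (completion_elem x) | x. adic_seq x \<and> x n \<in> Ipow n}"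
    using hom_completion_elem_zero[OF f] adic_seq_const[OF R.zero_closed] Ipow_zero by force
  fix u v assume "u \<in> {f (completion_elem x) | x. adic_seq x \<and> x n \<in> Ipow n}"
  then obtain x where x: "adic_seq x" "x n \<in> Ipow n" "u = f (completion_elem x)" by blast
  { assume "v \<in> {f (completion_elem x) | x. adic_seq x \<and> x n \<in> Ipow n}"
    then obtain y where y: "adic_seq y" "y n \<in> Ipow n" "v = f (completion_elem y)" by blast
    show "u \<oplus>\<^bsub>M\<^esub> v \<in> {f (completion_elem x) | x. adic_seq x \<and> x n \<in> Ipow n}"
      using hom_completion_elem_add[OF f x(1) y(1)] x y adic_seq_add[OF x(1) y(1)] Ipow_add[OF x(2) y(2)]
      by (intro CollectI exI[of _ "\<lambda>k. x k \<oplus> y k"]) auto }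
  fix r assume r: "r \<in> carrier R"
  show "r \<odot>\<^bsub>M\<^esub> u \<in> {f (completion_elem x) | x. adic_seq x \<and> x n \<in> Ipow n}"
    using hom_completion_elem_mult[OF f r x(1)] x adic_seq_mult[OF r x(1)] Ipow_mult[OF r x(2)]
    by (intro CollectI exI[of _ "\<lambda>k. r \<otimes> x k"]) auto
qed

lemma pow_smult_hom_image_subset:
  assumes f: "f \<in> module_Hom R completion M"
  shows "pow_smult (f ` carrier completion) n \<subseteq> {f (completion_elem x) | x. adic_seq x \<and> x n \<in> Ipow n}"
proof (rule ideal_smult_least[OF hom_image_Ipow_coord_submodule[OF f]])
  fix r u assume r: "r \<in> Ipow n" and u: "u \<in> f ` carrier completion"
  obtain x where x: "adic_seq x" "u = f (completion_elem x)" using u by (rule hom_image_completion_elemE)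
  have rR: "r \<in> carrier R" using r Ipow_carrier by auto
  show "r \<odot>\<^bsub>M\<^esub> u \<in> {f (completion_elem x) | x. adic_seq x \<and> x n \<in> Ipow n}"
    using hom_completion_elem_mult[OF f rR x(1)] x adic_seq_mult[OF rR x(1)]
      ideal.I_r_closed[OF Ipow_ideal r adic_seq_carrier[OF x(1)]]
    by (intro CollectI exI[of _ "\<lambda>k. r \<otimes> x k"]) auto
qed

lemma hom_image_cauchy_lift:
  assumes f: "f \<in> module_Hom R completion M"
    and s: "\<forall>n. s n \<in> f ` carrier completion"
      "\<forall>n. s (Suc n) \<ominus>\<^bsub>M\<^esub> s n \<in> pow_smult (f ` carrier completion) n"
  obtains S where "\<And>m. adic_seq (S m)" "\<And>m. f (completion_elem (S m)) = s m"
    "\<And>m. adic_seq (\<lambda>k. S (Suc m) k \<ominus> S m k)" "\<And>m. S (Suc m) m \<ominus> S m m \<in> Ipow m"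
proof -
  have "\<forall>m. \<exists>d. adic_seq d \<and> d m \<in> Ipow m \<and> s (Suc m) \<ominus>\<^bsub>M\<^esub> s m = f (completion_elem d)"
    using s(2) pow_smult_hom_image_subset[OF f] by blast
  then obtain d where d: "\<And>m. adic_seq (d m)" "\<And>m. d m m \<in> Ipow m"
    "\<And>m. s (Suc m) \<ominus>\<^bsub>M\<^esub> s m = f (completion_elem (d m))" by metis
  have "s 0 \<in> f ` carrier completion" using s(1) by blast
  then obtain e where e: "adic_seq e" "s 0 = f (completion_elem e)" by (rule hom_image_completion_elemE)
  define S where "S = (\<lambda>m k. rec_nat (e k) (\<lambda>j p. p \<oplus> d j k) m)"
  have S_Suc: "S (Suc m) = (\<lambda>k. S m k \<oplus> d m k)" for m unfolding S_def by simp
  have S_seq: "adic_seq (S m)" for m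
    by (induction m) (simp_all add: S_def e(1) S_Suc adic_seq_add d(1))
  have sM: "s m \<in> carrier M" for m using s(1) submoduleD(1)[OF hom_image_submodule[OF f]] by blast
  have S_s: "f (completion_elem (S m)) = s m" for m
  proof (induction m)
    case 0 then show ?case using e(2) by (simp add: S_def)
  next
    case (Suc m)
    have "f (completion_elem (S (Suc m))) = s m \<oplus>\<^bsub>M\<^esub> (s (Suc m) \<ominus>\<^bsub>M\<^esub> s m)"
      unfolding S_Suc hom_completion_elem_add[OF f S_seq d(1)] Suc d(3) ..
    then show ?case using M.a_add_minus_cancel[OF sM sM] by simp
  qed
  have S_diff: "(\<lambda>k. S (Suc m) k \<ominus> S m k) = d m" for m
    unfolding S_Suc using adic_seq_carrier[OF S_seq] adic_seq_carrier[OF d(1)]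
    by (simp add: R.a_add_minus_cancel_left)
  show ?thesis by (rule that[OF S_seq S_s]) (simp_all add: S_diff fun_cong[OF S_diff] d(1,2))
qed

lemma hom_image_has_adic_limits:
  assumes noeth: "noetherian_ring R" and f: "f \<in> module_Hom R completion M"
  shows "has_adic_limits (f ` carrier completion)"
  unfolding has_adic_limits_def
proof (intro allI impI)
  let ?N = "f ` carrier completion"
  fix s assume "(\<forall>n. s n \<in> ?N) \<and> (\<forall>n. s (Suc n) \<ominus>\<^bsub>M\<^esub> s n \<in> pow_smult ?N n)"
  then obtain S where S: "\<And>m. adic_seq (S m)" "\<And>m. f (completion_elem (S m)) = s m"
    "\<And>m. adic_seq (\<lambda>k. S (Suc m) k \<ominus> S m k)" "\<And>m. S (Suc m) m \<ominus> S m m \<in> Ipow m"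
    using hom_image_cauchy_lift[OF f] by blast
  define T where "T = (\<lambda>k. S k k)"
  have T_seq: "adic_seq T" unfolding T_def by (rule adic_seq_diagonal[OF S(1,3,4)])
  have "f (completion_elem T) \<ominus>\<^bsub>M\<^esub> s m \<in> pow_smult ?N m" for m
  proof -
    define D where "D = (\<lambda>k. T k \<ominus> S m k)"
    have D_seq: "adic_seq D" unfolding D_def by (rule adic_seq_minus[OF T_seq S(1)])
    have SR: "S m k \<in> carrier R" for k using adic_seq_carrier[OF S(1)] .
    have "D m = \<zero>" unfolding D_def T_def a_minus_def by (rule R.r_neg[OF SR])
    then have "f (completion_elem D) \<in> pow_smult ?N m"
      using hom_completion_elem_in_pow_smult[OF noeth f D_seq] Ipow_zero by simp
    moreover have "T = (\<lambda>k. S m k \<oplus> D k)"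
      unfolding D_def using R.a_add_minus_cancel[OF SR adic_seq_carrier[OF T_seq]] by simp
    then have "f (completion_elem T) = s m \<oplus>\<^bsub>M\<^esub> f (completion_elem D)"
      using hom_completion_elem_add[OF f S(1) D_seq] S(2) by simp
    moreover have "s m \<in> carrier M"
      using S(2)[of m] module_Hom_closed[OF f completion_elem_in_carrier[OF S(1)[of m]]] by simp
    ultimately show ?thesis
      using M.a_add_minus_cancel_left module_Hom_closed[OF f completion_elem_in_carrier[OF D_seq]] by simp
  qed
  then show "\<exists>x\<in>?N. \<forall>n. x \<ominus>\<^bsub>M\<^esub> s n \<in> pow_smult ?N n"
    using hom_completion_elem_in_image[where f=f, OF T_seq] by blast
qed

end

lemma (in krull_Rmodule) hom_image_subset_max_complete_submodule:
  assumes "f \<in> module_Hom R completion M"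
  shows "f ` carrier completion \<subseteq> max_complete_submodule R M I"
  using max_complete_submodule_greatest(2) hom_image_submodule hom_image_has_adic_limits
    noetherian_ring_axioms assms by blast

theorem lemma1p2:
  fixes R :: "'a ring" and I :: "'a set" and M :: "('a, 'm) module"
  assumes "cring R" and "noetherian_ring R"
    and "ideal I R" and "I \<subseteq> jacobson_radical R"
    and "module R M" and "fin_gen_module R M"
  shows "bij_betw (\<lambda>f. compose (carrier (ring_completion R I)) (\<lambda>y. y) f)
           (module_Hom R (ring_completion R I)
              (M\<lparr>carrier := max_complete_submodule R M I\<rparr>))
           (module_Hom R (ring_completion R I) M)"
proof -
  interpret krull_Rmodule R M I
    using assms by (simp add: krull_Rmodule_def krull_Rmodule_axioms_def fg_noetherian_Rmodule_def
        fg_noetherian_Rmodule_axioms_def noetherian_Rmodule_def Rmodule_def adic_Rmodule_def adic_ring_def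
        adic_ring_axioms_def)
  let ?H = "ring_completion R I"
  have Homs_eq: "module_Hom R ?H (M\<lparr>carrier := max_complete_submodule R M I\<rparr>) = module_Hom R ?H M"
    using module_Hom_restrict_codomain submoduleD(1)[OF max_complete_submodule_greatest(1)]
      hom_image_subset_max_complete_submodule by blast
  have "compose (carrier ?H) (\<lambda>y. y) f = f" if "f \<in> module_Hom R ?H M" for f
    using that extensional_restrict unfolding module_Hom_def compose_def PiE_def by auto
  then show ?thesis unfolding Homs_eq by (simp add: bij_betw_def inj_on_def cong: image_cong)
qed

end
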